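(* Let $A\in\mathbb{R}^{n\times n}$ be symmetric positive semi-definite with eigendecomposition $A=U\Lambda U^\top$, where $U=[u_1,\ldots,u_n]$ is orthogonal and $\Lambda=\mathrm{diag}(\lambda_1,\ldots,\lambda_n)$ with $\lambda_1\ge\cdots\ge\lambda_n\ge0$ (so $\lambda_j=\lambda_j(A)$). Let $1\le k<n$, $U_1=[u_1,\ldots,u_k]$, $U_2=[u_{k+1},\ldots,u_n]$, and let $0\le\epsilon<1$. Suppose $Q\in\mathbb{R}^{n\times k}$ has orthonormal columns ($Q^\top Q=I_k$) and \[ Q=U_1+\epsilon^2U_1M+\epsilon U_2N \] for some $M\in\mathbb{R}^{k\times k}$, $N\in\mathbb{R}^{(n-k)\times k}$ with $\|M\|_2\le1$, $\|N\|_2\le1$. For $i=1,\ldots,k$ define \[ \alpha_i:=1-\frac{3\lambda_{k+1}+3\epsilon^2(\lambda_1-\lambda_{k+1})}{\lambda_i}. \] Then for each $i=1,\ldots,k$ with $\alpha_i>0$: \[ |\lambda_i-\sigma_i(AQ)|\le|\lambda_i-\lambda_i(Q^\top AQ)|\le C_{RR}\,\epsilon^2\lambda_1, \] \[ \bigl|\lambda_i-\lambda_i\bigl(AQ(Q^\top AQ)^{\dagger}(AQ)^\top\bigr)\bigr|\le C_{Nys,i}\bigl(\epsilon^2\lambda_{k+1}+\epsilon^4(\lambda_1-\lambda_{k+1})\bigr), \] where $C_{RR}:=2+\epsilon^2+\lambda_{k+1}/\lambda_1\le4$ and \[ C_{Nys,i}:=\left(\frac{\lambda_1(1+\epsilon^2)+\lambda_{k+1}\Bigl(1+\frac{\epsilon^2}{1+\sqrt{1-\epsilon^2}}\Bigr)}{\alpha_i\lambda_i}\right)^{2}.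 \]
   Context: $\|\cdot\|_2$ is the spectral norm. For a symmetric matrix $B$, $\lambda_i(B)$ denotes its $i$-th largest eigenvalue; $\sigma_i(B)$ denotes the $i$-th largest singular value of a matrix $B$; $B^{\dagger}$ is the Moore–Penrose pseudoinverse. The quantities $\lambda_i(Q^\top AQ)$, $\sigma_i(AQ)$ and $\lambda_i(AQ(Q^\top AQ)^{\dagger}(AQ)^\top)$ are the Rayleigh–Ritz, SVD-extract and Nyström eigenvalue estimates, respectively. (Implicitly $\lambda_1>0$ so that $C_{RR}$ is defined.) *)

theory Defs
  imports Complex_Main "Jordan_Normal_Form.Matrix"
begin

(* All matrices are real JNF matrices ('real mat'); matrix indices are 0-based,
   eigenvalue/singular-value indices are 1-based as in the paper. *)

definition sym_eig :: "real mat \<Rightarrow> nat \<Rightarrow> real" where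
  "sym_eig B = (SOME d.
     (\<forall>i j. 1 \<le> i \<longrightarrow> i \<le> j \<longrightarrow> j \<le> dim_row B \<longrightarrow> d j \<le> d i) \<and>
     (\<exists>V \<in> carrier_mat (dim_row B) (dim_row B).
        transpose_mat V * V = 1\<^sub>m (dim_row B) \<and>
        B = V * mat_diag (dim_row B) (\<lambda>j. d (j + 1)) * transpose_mat V))"

definition sing_val :: "real mat \<Rightarrow> nat \<Rightarrow> real" where
  "sing_val B i = sqrt (sym_eig (transpose_mat B * B) i)"

definition spec_norm :: "real mat \<Rightarrow> real" where
  "spec_norm B = Sup {sqrt ((B *\<^sub>v v) \<bullet> (B *\<^sub>v v)) | v.
                       v \<in> carrier_vec (dim_col B) \<and> v \<bullet> v = 1}"

definition pinv :: "real mat \<Rightarrow> real mat" where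
  "pinv B = (SOME X. X \<in> carrier_mat (dim_col B) (dim_row B) \<and>
                     B * X * B = B \<and> X * B * X = X \<and>
                     transpose_mat (B * X) = B * X \<and>
                     transpose_mat (X * B) = X * B)"

end

(*
  Write Q = U G with G = U^T Q = [I + eps^2 M; eps N]; every bound comes from the Courant-Fischer
  characterisation of sorted eigenvalues.

  Rayleigh-Ritz: for x supported on the first i coordinates, x^T Q^T A Q x is at least lambda_i
  times the squared norm of the first i coordinates of (I + eps^2 M) x, which is at least
  (1 - eps^2)^2 |x|^2 because |M| <= 1; so (1 - eps^2)^2 lambda_i <= lambda_i(Q^T A Q).  Cauchy-Schwarz gives
  (x^T Q^T A Q x)^2 <= |x|^2 |A Q x|^2, hence lambda_i(Q^T A Q) <= sigma_i(A Q), and interlacing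
  for A^2 gives sigma_i(A Q) <= lambda_i.

  Nystrom: A_N = A Q (Q^T A Q)^+ (A Q)^T satisfies A_N <= A and
  x^T A_N x >= x^T A x - (x - Q c)^T A (x - Q c) for every c.  For x in the span of u_1, ..., u_i
  take c with (I + eps^2 M) c equal to the coordinates of x; then x - Q c = - eps U_2 N c and
  |c| <= |x| / (1 - eps^2), so lambda_i(A_N) >= lambda_i - eps^2 lambda_(k+1) / (1 - eps^2)^2.
  These bounds are sharper than the stated ones, since 1 / (1 - eps^2)^2 <= C_Nys,i when alpha_i > 0.
*)
theory Submission
  imports Defs "Jordan_Normal_Form.Spectral_Radius"
begin

section \<open>Vectors and quadratic forms\<close>

lemma index_mult_mat_sum:
  assumes "A \<in> carrier_mat r m" "B \<in> carrier_mat m c" "i < r" "j < c"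
  shows "(A * B) $$ (i,j) = (\<Sum>k\<in>{0..<m}. A $$ (i,k) * B $$ (k,j))"
  using assms by (simp add: scalar_prod_def)

lemma index_mult_mat_vec_sum:
  assumes "A \<in> carrier_mat r m" "v \<in> carrier_vec m" "i < r"
  shows "(A *\<^sub>v v) $ i = (\<Sum>k\<in>{0..<m}. A $$ (i,k) * v $ k)"
  using assms by (simp add: scalar_prod_def)

lemma scalar_prod_self_nonneg: "0 \<le> (v :: real vec) \<bullet> v"
  using conjugate_square_ge_0_vec[of v] by simp

lemma scalar_prod_self_pos:
  "(v :: real vec) \<in> carrier_vec n \<Longrightarrow> v \<noteq> 0\<^sub>v n \<Longrightarrow> 0 < v \<bullet> v"
  using conjugate_square_greater_0_vec[of v n] by simp

lemma scalar_prod_self_eq_0: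
  "(v :: real vec) \<in> carrier_vec n \<Longrightarrow> v \<bullet> v = 0 \<Longrightarrow> v = 0\<^sub>v n"
  using conjugate_square_eq_0_vec[of v n] by simp

lemma scalar_prod_self_sum_squares: "(w :: real vec) \<bullet> w = (\<Sum>r\<in>{0..<dim_vec w}. (w $ r)\<^sup>2)"
  unfolding scalar_prod_def by (simp add: power2_eq_square)

lemma scalar_prod_Cauchy_Schwarz:
  fixes a b :: "real vec"
  assumes a: "a \<in> carrier_vec n" and b: "b \<in> carrier_vec n"
  shows "(a \<bullet> b)\<^sup>2 \<le> (a \<bullet> a) * (b \<bullet> b)"
proof (cases "b = 0\<^sub>v n")
  case True
  then show ?thesis using a by simp
next
  case False
  then have bb: "0 < b \<bullet> b" using scalar_prod_self_pos[OF b] by simp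
  define t where "t = (a \<bullet> b) / (b \<bullet> b)"
  have "0 \<le> (a - t \<cdot>\<^sub>v b) \<bullet> (a - t \<cdot>\<^sub>v b)" by (rule scalar_prod_self_nonneg)
  also have "\<dots> = a \<bullet> a - 2 * t * (a \<bullet> b) + t\<^sup>2 * (b \<bullet> b)"
    using a b by (simp add: minus_scalar_prod_distrib[of _ n] scalar_prod_minus_distrib[of _ n]
        comm_scalar_prod[of b n a] power2_eq_square algebra_simps)
  also have "\<dots> = a \<bullet> a - (a \<bullet> b)\<^sup>2 / (b \<bullet> b)"
    using bb by (simp add: t_def power2_eq_square field_simps)
  finally show ?thesis using bb by (simp add: field_simps)
qed

lemma sq_norm_add_smult_ge:
  fixes x m :: "real vec"
  assumes x: "x \<in> carrier_vec p" and m: "m \<in> carrier_vec p" and mm: "m \<bullet> m \<le> x \<bullet> x"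
    and e: "0 \<le> e" "e \<le> 1"
  shows "(1 - e)\<^sup>2 * (x \<bullet> x) \<le> (x + e \<cdot>\<^sub>v m) \<bullet> (x + e \<cdot>\<^sub>v m)"
proof -
  define a where "a = sqrt (x \<bullet> x)"
  define b where "b = sqrt (m \<bullet> m)"
  have aa: "x \<bullet> x = a\<^sup>2" and bb: "m \<bullet> m = b\<^sup>2"
    unfolding a_def b_def using scalar_prod_self_nonneg by simp_all
  have a0: "0 \<le> a" and b0: "0 \<le> b" and ba: "b \<le> a"
    unfolding a_def b_def using mm scalar_prod_self_nonneg[of x] scalar_prod_self_nonneg[of m] by simp_all
  have "(x \<bullet> m)\<^sup>2 \<le> (a * b)\<^sup>2"
    using scalar_prod_Cauchy_Schwarz[OF x m] unfolding aa bb by (simp add: power_mult_distrib)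
  then have "\<bar>x \<bullet> m\<bar> \<le> a * b"
    using abs_le_square_iff[of "x \<bullet> m" "a * b"] a0 b0 by (simp add: abs_mult)
  then have xm: "- (a * b) \<le> x \<bullet> m" by linarith
  have "(x + e \<cdot>\<^sub>v m) \<bullet> (x + e \<cdot>\<^sub>v m) = a\<^sup>2 + 2 * e * (x \<bullet> m) + e\<^sup>2 * b\<^sup>2"
    using x m unfolding aa[symmetric] bb[symmetric]
    by (simp add: add_scalar_prod_distrib[of _ p] scalar_prod_add_distrib[of _ p]
        comm_scalar_prod[of m p x] power2_eq_square algebra_simps)
  also have "\<dots> \<ge> (a - e * b)\<^sup>2"
    using mult_left_mono[OF xm e(1)] by (simp add: power2_eq_square algebra_simps)
  finally have "(a - e * b)\<^sup>2 \<le> (x + e \<cdot>\<^sub>v m) \<bullet> (x + e \<cdot>\<^sub>v m)" .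
  moreover have "0 \<le> (1 - e) * a" using e a0 by simp
  moreover have "(1 - e) * a \<le> a - e * b"
    using mult_left_mono[OF ba e(1)] by (simp add: algebra_simps)
  ultimately show ?thesis
    unfolding aa by (metis power_mono order_trans power_mult_distrib)
qed

lemma mult_mat_zero_vec: "A \<in> carrier_mat r c \<Longrightarrow> A *\<^sub>v 0\<^sub>v c = (0\<^sub>v r :: real vec)"
  by (intro eq_vecI) auto

lemma sym_mat_scalar_prod_swap:
  fixes A :: "real mat"
  assumes A: "A \<in> carrier_mat n n" and sym: "transpose_mat A = A"
    and x: "x \<in> carrier_vec n" and y: "y \<in> carrier_vec n"
  shows "x \<bullet> (A *\<^sub>v y) = y \<bullet> (A *\<^sub>v x)"
proof -
  have "x \<bullet> (A *\<^sub>v y) = (transpose_mat A *\<^sub>v x) \<bullet> y"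
    using transpose_vec_mult_scalar[OF A y x] by simp
  also have "\<dots> = y \<bullet> (A *\<^sub>v x)" using sym comm_scalar_prod[of y n "A *\<^sub>v x"] A x y by simp
  finally show ?thesis .
qed

lemma quadratic_form_diff:
  fixes A :: "real mat"
  assumes A: "A \<in> carrier_mat n n" and sym: "transpose_mat A = A"
    and z: "z \<in> carrier_vec n" and w: "w \<in> carrier_vec n"
  shows "(z - w) \<bullet> (A *\<^sub>v (z - w)) = z \<bullet> (A *\<^sub>v z) - 2 * (w \<bullet> (A *\<^sub>v z)) + w \<bullet> (A *\<^sub>v w)"
proof -
  have "(z - w) \<bullet> (A *\<^sub>v (z - w)) = z \<bullet> (A *\<^sub>v z) - z \<bullet> (A *\<^sub>v w) - (w \<bullet> (A *\<^sub>v z) - w \<bullet> (A *\<^sub>v w))"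
    using A z w by (simp add: mult_minus_distrib_mat_vec[OF A z w]
        minus_scalar_prod_distrib[of _ n] scalar_prod_minus_distrib[of _ n])
  then show ?thesis using sym_mat_scalar_prod_swap[OF A sym z w] by simp
qed

lemma quadratic_form_congruent:
  fixes F G :: "real mat"
  assumes F: "F \<in> carrier_mat n k" and G: "G \<in> carrier_mat n n" and w: "w \<in> carrier_vec k"
  shows "w \<bullet> ((transpose_mat F * G * F) *\<^sub>v w) = (F *\<^sub>v w) \<bullet> (G *\<^sub>v (F *\<^sub>v w))"
proof -
  have Ft: "transpose_mat F \<in> carrier_mat k n" using F by simp
  have v: "G *\<^sub>v (F *\<^sub>v w) \<in> carrier_vec n" using F G w by simp
  have "(transpose_mat F * G * F) *\<^sub>v w = transpose_mat F *\<^sub>v (G *\<^sub>v (F *\<^sub>v w))"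
    using F G w Ft by (simp add: assoc_mult_mat_vec[of _ k n _ k] assoc_mult_mat_vec[of _ k n _ n])
  then have "w \<bullet> ((transpose_mat F * G * F) *\<^sub>v w) = (transpose_mat F *\<^sub>v (G *\<^sub>v (F *\<^sub>v w))) \<bullet> w"
    using comm_scalar_prod[OF w] Ft v by simp
  also have "\<dots> = (F *\<^sub>v w) \<bullet> (G *\<^sub>v (F *\<^sub>v w))"
    using transpose_vec_mult_scalar[OF F w v] comm_scalar_prod[OF v, of "F *\<^sub>v w"] F w by simp
  finally show ?thesis .
qed

lemma orthonormal_cols_scalar_prod:
  fixes X :: "real mat"
  assumes X: "X \<in> carrier_mat m p" and XX: "transpose_mat X * X = 1\<^sub>m p"
    and x: "x \<in> carrier_vec p" and y: "y \<in> carrier_vec p"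
  shows "(X *\<^sub>v x) \<bullet> (X *\<^sub>v y) = x \<bullet> y"
proof -
  have "(X *\<^sub>v x) \<bullet> (X *\<^sub>v y) = (transpose_mat X *\<^sub>v (X *\<^sub>v x)) \<bullet> y"
    using transpose_vec_mult_scalar[OF X y] X x by simp
  also have "transpose_mat X *\<^sub>v (X *\<^sub>v x) = x"
    using X x XX by (simp add: assoc_mult_mat_vec[of _ p m _ p, symmetric])
  finally show ?thesis .
qed

lemma orthonormal_cols_mult:
  fixes Q X :: "real mat"
  assumes Q: "Q \<in> carrier_mat n k" and QQ: "transpose_mat Q * Q = 1\<^sub>m k"
    and X: "X \<in> carrier_mat k p" and XX: "transpose_mat X * X = 1\<^sub>m p"
  shows "transpose_mat (Q * X) * (Q * X) = 1\<^sub>m p"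
proof -
  have "transpose_mat (Q * X) * (Q * X) = transpose_mat X * ((transpose_mat Q * Q) * X)"
    using Q X by (simp add: transpose_mult[OF Q X] assoc_mult_mat[of _ p k _ n _ p]
        assoc_mult_mat[of _ k n _ k _ p])
  then show ?thesis using QQ X XX by simp
qed

lemma psd_quadratic_form_zero_imp_zero:
  fixes A :: "real mat"
  assumes A: "A \<in> carrier_mat n n" and sym: "transpose_mat A = A"
    and psd: "\<And>v. v \<in> carrier_vec n \<Longrightarrow> 0 \<le> v \<bullet> (A *\<^sub>v v)"
    and z: "z \<in> carrier_vec n" and zz: "z \<bullet> (A *\<^sub>v z) = 0"
  shows "A *\<^sub>v z = 0\<^sub>v n"
proof -
  define w where "w = A *\<^sub>v z"
  have w: "w \<in> carrier_vec n" unfolding w_def using A z by simp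
  define a where "a = w \<bullet> w"
  define b where "b = w \<bullet> (A *\<^sub>v w)"
  have b0: "0 \<le> b" unfolding b_def using psd w by simp
  \<comment> \<open>the quadratic \<open>t \<mapsto> (z - t w)\<^sup>T A (z - t w) = b t\<^sup>2 - 2 a t\<close> stays nonnegative only if \<open>a = 0\<close>\<close>
  define t where "t = a / (b + 1)"
  have "0 \<le> (z - t \<cdot>\<^sub>v w) \<bullet> (A *\<^sub>v (z - t \<cdot>\<^sub>v w))" using psd z w by simp
  also have "\<dots> = z \<bullet> (A *\<^sub>v z) - 2 * ((t \<cdot>\<^sub>v w) \<bullet> (A *\<^sub>v z))
      + (t \<cdot>\<^sub>v w) \<bullet> (A *\<^sub>v (t \<cdot>\<^sub>v w))"
    by (rule quadratic_form_diff[OF A sym z]) (use w in simp)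
  also have "\<dots> = t\<^sup>2 * b - 2 * t * a"
    unfolding mult_mat_vec[OF A w] using zz w A
    by (simp add: a_def b_def w_def[symmetric] power2_eq_square
        smult_scalar_prod_distrib[of _ n] scalar_prod_smult_distrib[of _ n])
  also have "\<dots> = - a\<^sup>2 * (b + 2) / (b + 1)\<^sup>2"
    using b0 unfolding t_def by (simp add: power2_eq_square divide_simps) (simp add: algebra_simps)
  finally have "a\<^sup>2 * (b + 2) \<le> 0" using b0 by (simp add: divide_le_0_iff)
  then have "a = 0" using b0 by (simp add: mult_le_0_iff)
  then show ?thesis using scalar_prod_self_eq_0[OF w] unfolding a_def w_def by simp
qed

lemma spec_norm_le_1_imp_sq_norm_le:
  fixes M :: "real mat"
  assumes M: "M \<in> carrier_mat r c" and norm: "spec_norm M \<le> 1" and x: "x \<in> carrier_vec c"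
  shows "(M *\<^sub>v x) \<bullet> (M *\<^sub>v x) \<le> x \<bullet> x"
proof (cases "x = 0\<^sub>v c")
  case True
  then show ?thesis using mult_mat_zero_vec[OF M] by simp
next
  case False
  define S where "S = {sqrt ((M *\<^sub>v v) \<bullet> (M *\<^sub>v v)) | v. v \<in> carrier_vec (dim_col M) \<and> v \<bullet> v = 1}"
  \<comment> \<open>the Frobenius norm bounds every element of \<open>S\<close>\<close>
  define F where "F = (\<Sum>i\<in>{0..<r}. row M i \<bullet> row M i)"
  have "bdd_above S"
  proof (rule bdd_aboveI)
    fix s assume "s \<in> S"
    then obtain v where v: "v \<in> carrier_vec c" "v \<bullet> v = 1" and s: "s = sqrt ((M *\<^sub>v v) \<bullet> (M *\<^sub>v v))"
      unfolding S_def using M by auto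
    have "(M *\<^sub>v v) \<bullet> (M *\<^sub>v v) = (\<Sum>i\<in>{0..<r}. (row M i \<bullet> v)\<^sup>2)"
      using M v by (simp add: scalar_prod_def[of "M *\<^sub>v v"] power2_eq_square)
    also have "\<dots> \<le> (\<Sum>i\<in>{0..<r}. (row M i \<bullet> row M i) * (v \<bullet> v))"
      using M v by (intro sum_mono scalar_prod_Cauchy_Schwarz[of _ c]) auto
    finally show "s \<le> sqrt F" unfolding s F_def using v(2) by simp
  qed
  define s where "s = sqrt (x \<bullet> x)"
  have s0: "0 < s" unfolding s_def using scalar_prod_self_pos[OF x False] by simp
  define v where "v = (1 / s) \<cdot>\<^sub>v x"
  have v: "v \<in> carrier_vec c" unfolding v_def using x by simp
  have "v \<bullet> v = 1" unfolding v_def using x s0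
    by (simp add: s_def power2_eq_square[symmetric] scalar_prod_self_nonneg)
  then have "sqrt ((M *\<^sub>v v) \<bullet> (M *\<^sub>v v)) \<in> S" unfolding S_def using v M by auto
  then have "sqrt ((M *\<^sub>v v) \<bullet> (M *\<^sub>v v)) \<le> Sup S" using \<open>bdd_above S\<close> by (rule cSup_upper)
  also have "Sup S = spec_norm M" unfolding S_def spec_norm_def ..
  finally have "sqrt ((M *\<^sub>v v) \<bullet> (M *\<^sub>v v)) \<le> 1" using norm by linarith
  then have "(M *\<^sub>v v) \<bullet> (M *\<^sub>v v) \<le> 1" by simp
  moreover have "(M *\<^sub>v v) \<bullet> (M *\<^sub>v v) = ((M *\<^sub>v x) \<bullet> (M *\<^sub>v x)) / (x \<bullet> x)"
    unfolding v_def using M x s0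
    by (simp add: mult_mat_vec[OF M x] s_def power2_eq_square[symmetric] scalar_prod_self_nonneg)
  ultimately show ?thesis using s0 by (simp add: s_def divide_le_eq)
qed

lemma transpose_conjugate_mat:
  fixes F Y :: "real mat"
  assumes F: "F \<in> carrier_mat n k" and Y: "Y \<in> carrier_mat k k"
  shows "transpose_mat (F * Y * transpose_mat F) = F * transpose_mat Y * transpose_mat F"
  using F Y by (simp add: transpose_mult[of _ n k _ n] transpose_mult[of _ k k _ n]
      assoc_mult_mat[of _ n k _ k _ n] mult_carrier_mat[of _ n k _ k] mult_carrier_mat[of _ k k _ n])

lemma transpose_mat_diag: "transpose_mat (mat_diag k f) = mat_diag k f"
  by (rule eq_matI) (auto simp: mat_diag_def)

lemma congruent_mat_sym:
  fixes A F :: "real mat"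
  assumes A: "A \<in> carrier_mat n n" "transpose_mat A = A" and F: "F \<in> carrier_mat n k"
  shows "transpose_mat F * A * F \<in> carrier_mat k k"
    "transpose_mat (transpose_mat F * A * F) = transpose_mat F * A * F"
  using A F transpose_conjugate_mat[of "transpose_mat F" k n A] by auto

lemma mat_diag_conjugate_mult:
  fixes V :: "real mat"
  assumes V: "V \<in> carrier_mat k k" and VV: "transpose_mat V * V = 1\<^sub>m k"
  shows "(V * mat_diag k f * transpose_mat V) * (V * mat_diag k g * transpose_mat V) =
    V * mat_diag k (\<lambda>j. f j * g j) * transpose_mat V"
proof -
  note simps = assoc_mult_mat[of _ k k _ k _ k] mult_carrier_mat[of _ k k _ k] right_mult_one_mat[of _ k k]
  have "(V * mat_diag k f * transpose_mat V) * (V * mat_diag k g * transpose_mat V) =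
      V * mat_diag k f * (transpose_mat V * V) * mat_diag k g * transpose_mat V"
    using V by (simp add: simps)
  also have "\<dots> = V * (mat_diag k f * mat_diag k g) * transpose_mat V"
    unfolding VV using V by (simp add: simps)
  finally show ?thesis by simp
qed

lemma mat_diag_mult_vec:
  assumes w: "w \<in> carrier_vec m"
  shows "mat_diag m f *\<^sub>v w = vec m (\<lambda>r. f r * w $ r)"
proof (rule eq_vecI)
  fix r assume "r < dim_vec (vec m (\<lambda>r. f r * w $ r))"
  then have r: "r < m" by simp
  have "(mat_diag m f *\<^sub>v w) $ r = (\<Sum>k\<in>{0..<m}. (if r = k then f k else 0) * w $ k)"
    using r w by (simp add: mat_diag_def scalar_prod_def)
  also have "\<dots> = (\<Sum>k\<in>{0..<m}. if k = r then f r * w $ r else 0)" by (rule sum.cong) auto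
  finally show "(mat_diag m f *\<^sub>v w) $ r = vec m (\<lambda>r. f r * w $ r) $ r" using r by simp
qed (simp add: mat_diag_def)

lemma mat_mult_vec_nontrivial_kernel:
  fixes R :: "real mat"
  assumes R: "R \<in> carrier_mat r p" and rp: "r < p"
  obtains y where "y \<in> carrier_vec p" "y \<noteq> 0\<^sub>v p" "R *\<^sub>v y = 0\<^sub>v r"
proof -
  \<comment> \<open>pad \<open>R\<close> with zero rows to a singular square matrix\<close>
  define K where "K = mat p p (\<lambda>(i, j). if i < r then R $$ (i, j) else 0)"
  have K: "K \<in> carrier_mat p p" unfolding K_def by simp
  have "transpose_mat K *\<^sub>v unit_vec p (p - 1) = 0\<^sub>v p"
    using rp by (intro eq_vecI) (auto simp: K_def scalar_prod_def unit_vec_def)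
  moreover have "unit_vec p (p - 1) \<noteq> (0\<^sub>v p :: real vec)"
    using rp arg_cong[of "unit_vec p (p - 1)" "0\<^sub>v p :: real vec" "\<lambda>v. v $ (p - 1)"] by auto
  ultimately have "det (transpose_mat K) = 0"
    using det_0_iff_vec_prod_zero[of "transpose_mat K" p] K by (metis transpose_carrier_mat unit_vec_carrier)
  then obtain y where y: "y \<in> carrier_vec p" "y \<noteq> 0\<^sub>v p" and Ky: "K *\<^sub>v y = 0\<^sub>v p"
    using det_0_iff_vec_prod_zero[OF K] det_transpose[OF K] by auto
  have "R *\<^sub>v y = 0\<^sub>v r"
  proof (rule eq_vecI)
    fix i assume "i < dim_vec (0\<^sub>v r :: real vec)"
    then have i: "i < r" by simp
    have "(R *\<^sub>v y) $ i = (K *\<^sub>v y) $ i" using i rp R y by (simp add: K_def scalar_prod_def)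
    then show "(R *\<^sub>v y) $ i = 0\<^sub>v r $ i" using Ky i rp by simp
  qed (use R in simp)
  then show ?thesis using that y by blast
qed

lemma mat_mult_vec_solvable:
  fixes G :: "real mat"
  assumes G: "G \<in> carrier_mat k k" and inj: "\<And>c. c \<in> carrier_vec k \<Longrightarrow> G *\<^sub>v c = 0\<^sub>v k \<Longrightarrow> c = 0\<^sub>v k"
    and y: "y \<in> carrier_vec k"
  obtains c where "c \<in> carrier_vec k" "G *\<^sub>v c = y"
proof -
  have "det G \<noteq> 0" using det_0_iff_vec_prod_zero[OF G] inj by auto
  then obtain G' where G': "G' \<in> carrier_mat k k" "G * G' = 1\<^sub>m k"
    using det_non_zero_imp_unit[OF G] unfolding Units_def by (auto simp: ring_mat_def)
  show ?thesis
    using that[of "G' *\<^sub>v y"] G G' y by (simp add: assoc_mult_mat_vec[symmetric, of G k k G' k])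
qed

section \<open>The spectral theorem for real symmetric matrices\<close>

lemma complex_eigenvector_re_im:
  fixes A :: "real mat" and v :: "complex vec"
  assumes A: "A \<in> carrier_mat n n" and v: "v \<in> carrier_vec n"
    and Av: "map_mat complex_of_real A *\<^sub>v v = \<mu> \<cdot>\<^sub>v v"
  defines "x \<equiv> vec n (\<lambda>i. Re (v $ i))" and "y \<equiv> vec n (\<lambda>i. Im (v $ i))"
  shows "A *\<^sub>v x = Re \<mu> \<cdot>\<^sub>v x - Im \<mu> \<cdot>\<^sub>v y" and "A *\<^sub>v y = Im \<mu> \<cdot>\<^sub>v x + Re \<mu> \<cdot>\<^sub>v y"
proof -
  have entry: "(\<Sum>j\<in>{0..<n}. complex_of_real (A $$ (i,j)) * v $ j) = \<mu> * v $ i" if "i < n" for i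
    using arg_cong[OF Av, of "\<lambda>w. w $ i"] that A v by (simp add: scalar_prod_def)
  have "(A *\<^sub>v x) $ i = Re (\<Sum>j\<in>{0..<n}. complex_of_real (A $$ (i,j)) * v $ j)"
    and "(A *\<^sub>v y) $ i = Im (\<Sum>j\<in>{0..<n}. complex_of_real (A $$ (i,j)) * v $ j)" if "i < n" for i
    using that A by (simp_all add: x_def y_def scalar_prod_def Re_sum Im_sum)
  then show "A *\<^sub>v x = Re \<mu> \<cdot>\<^sub>v x - Im \<mu> \<cdot>\<^sub>v y" and "A *\<^sub>v y = Im \<mu> \<cdot>\<^sub>v x + Re \<mu> \<cdot>\<^sub>v y"
    using A by (auto intro!: eq_vecI simp: entry x_def y_def)
qed

lemma sym_mat_has_eigenvalue:
  fixes A :: "real mat"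
  assumes A: "A \<in> carrier_mat n n" and sym: "transpose_mat A = A" and n: "0 < n"
  shows "\<exists>e. eigenvalue A e"
proof -
  let ?Ac = "map_mat complex_of_real A"
  obtain \<mu> where "eigenvalue ?Ac \<mu>"
    using spectrum_non_empty[of ?Ac n] A n unfolding spectrum_def by auto
  then obtain v where v: "v \<in> carrier_vec n" "v \<noteq> 0\<^sub>v n" and Av: "?Ac *\<^sub>v v = \<mu> \<cdot>\<^sub>v v"
    unfolding eigenvalue_def eigenvector_def using A by auto
  define x where "x = vec n (\<lambda>i. Re (v $ i))"
  define y where "y = vec n (\<lambda>i. Im (v $ i))"
  have x: "x \<in> carrier_vec n" and y: "y \<in> carrier_vec n" unfolding x_def y_def by simp_all
  note Ax = complex_eigenvector_re_im(1)[OF A v(1) Av, folded x_def y_def]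
  note Ay = complex_eigenvector_re_im(2)[OF A v(1) Av, folded x_def y_def]
  \<comment> \<open>symmetry forces the imaginary part of \<open>\<mu>\<close> to vanish\<close>
  have "x \<bullet> (A *\<^sub>v y) = y \<bullet> (A *\<^sub>v x)" by (rule sym_mat_scalar_prod_swap[OF A sym x y])
  then have im: "Im \<mu> * (x \<bullet> x + y \<bullet> y) = 0"
    unfolding Ax Ay using x y
    by (simp add: scalar_prod_add_distrib[of _ n] scalar_prod_minus_distrib[of _ n]
        comm_scalar_prod[of y n x] algebra_simps)
  have "x \<noteq> 0\<^sub>v n \<or> y \<noteq> 0\<^sub>v n"
  proof (rule ccontr)
    assume "\<not> ?thesis"
    then have "x $ i = 0" "y $ i = 0" if "i < n" for i
      using that by auto
    then have "v $ i = 0" if "i < n" for i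
      using that unfolding x_def y_def by (simp add: complex_eq_iff)
    then show False using v by (auto intro!: eq_vecI)
  qed
  then have "0 < x \<bullet> x + y \<bullet> y"
    using scalar_prod_self_pos[OF x] scalar_prod_self_pos[OF y] scalar_prod_self_nonneg[of x]
      scalar_prod_self_nonneg[of y] by fastforce
  then have "Im \<mu> = 0" using im by simp
  then have "A *\<^sub>v x = Re \<mu> \<cdot>\<^sub>v x" "A *\<^sub>v y = Re \<mu> \<cdot>\<^sub>v y" using Ax Ay x y by auto
  then show ?thesis
    using \<open>x \<noteq> 0\<^sub>v n \<or> y \<noteq> 0\<^sub>v n\<close> x y A unfolding eigenvalue_def eigenvector_def by auto
qed

lemma sym_mat_max_eigenpair:
  fixes A :: "real mat"
  assumes A: "A \<in> carrier_mat n n" and sym: "transpose_mat A = A" and n: "0 < n"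
  obtains lam u where "u \<in> carrier_vec n" "u \<bullet> u = 1" "u $ 0 \<le> 0" "A *\<^sub>v u = lam \<cdot>\<^sub>v u"
    "\<And>e. eigenvalue A e \<Longrightarrow> e \<le> lam"
proof -
  have fin: "finite (spectrum A)" using card_finite_spectrum(1)[OF A] .
  have "spectrum A \<noteq> {}"
    using sym_mat_has_eigenvalue[OF A sym n] unfolding spectrum_def by auto
  then have "Max (spectrum A) \<in> spectrum A" using fin by simp
  then obtain v where v: "v \<in> carrier_vec n" "v \<noteq> 0\<^sub>v n"
    and Av: "A *\<^sub>v v = Max (spectrum A) \<cdot>\<^sub>v v"
    unfolding spectrum_def eigenvalue_def eigenvector_def using A by auto
  have vv: "0 < v \<bullet> v" using scalar_prod_self_pos[OF v] .
  \<comment> \<open>the sign keeps \<open>u\<close> away from \<open>e\<^sub>0\<close>, as the Householder reflection below requires\<close>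
  define c where "c = (if v $ 0 \<le> 0 then 1 else -1) / sqrt (v \<bullet> v)"
  define u where "u = c \<cdot>\<^sub>v v"
  have u: "u \<in> carrier_vec n" unfolding u_def using v by simp
  have "u \<bullet> u = c * c * (v \<bullet> v)" unfolding u_def using v by simp
  also have "c * c = 1 / (v \<bullet> v)" unfolding c_def using vv by (simp add: field_simps)
  finally have "u \<bullet> u = 1" using vv by simp
  moreover have "u $ 0 \<le> 0"
    using v n vv by (auto simp: u_def c_def divide_le_0_iff mult_le_0_iff)
  moreover have "A *\<^sub>v u = Max (spectrum A) \<cdot>\<^sub>v u"
    unfolding u_def using mult_mat_vec[OF A v(1), of c] Av by (metis mult.commute smult_smult_assoc)
  moreover have "e \<le> Max (spectrum A)" if "eigenvalue A e" for e
    using Max_ge[OF fin] that unfolding spectrum_def by auto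
  ultimately show ?thesis using that u by blast
qed

definition householder_mat :: "real vec \<Rightarrow> real mat" where
  "householder_mat w =
     mat (dim_vec w) (dim_vec w) (\<lambda>(i, j). (if i = j then 1 else 0) - 2 * w $ i * w $ j / (w \<bullet> w))"

lemma householder_mat_carrier: "householder_mat w \<in> carrier_mat (dim_vec w) (dim_vec w)"
  unfolding householder_mat_def by simp

lemma householder_mat_sym: "transpose_mat (householder_mat w) = householder_mat w"
  unfolding householder_mat_def by (rule eq_matI) (auto simp: mult.commute)

lemma householder_mat_involution:
  assumes w: "w \<in> carrier_vec n" and s: "w \<bullet> w \<noteq> 0"
  shows "householder_mat w * householder_mat w = 1\<^sub>m n"
proof (rule eq_matI)
  fix i j assume "i < dim_row (1\<^sub>m n)" "j < dim_col (1\<^sub>m n)"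
  then have i: "i < n" and j: "j < n" by auto
  let ?s = "w \<bullet> w" and ?d = "\<lambda>i j. if i = j then 1 else (0 :: real)"
  have H: "householder_mat w \<in> carrier_mat n n" using householder_mat_carrier[of w] w by simp
  have "(householder_mat w * householder_mat w) $$ (i,j)
      = (\<Sum>k\<in>{0..<n}. (?d i k - 2 * w $ i * w $ k / ?s) * (?d k j - 2 * w $ k * w $ j / ?s))"
    using index_mult_mat_sum[OF H H i j] i j w by (simp add: householder_mat_def)
  also have "\<dots> = (\<Sum>k\<in>{0..<n}. ?d i k * ?d k j - (if i = k then 2 * w $ k * w $ j / ?s else 0)
      - (if k = j then 2 * w $ i * w $ k / ?s else 0) + 4 * w $ i * w $ j / (?s * ?s) * (w $ k * w $ k))"
    by (rule sum.cong[OF refl]) (use s in \<open>auto simp: field_simps\<close>)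
  also have "\<dots> = (\<Sum>k\<in>{0..<n}. ?d i k * ?d k j) - (\<Sum>k\<in>{0..<n}. if i = k then 2 * w $ k * w $ j / ?s else 0)
      - (\<Sum>k\<in>{0..<n}. if k = j then 2 * w $ i * w $ k / ?s else 0)
      + 4 * w $ i * w $ j / (?s * ?s) * (\<Sum>k\<in>{0..<n}. w $ k * w $ k)"
    by (simp only: sum.distrib sum_subtractf sum_distrib_left)
  also have "\<dots> = ?d i j - 2 * w $ i * w $ j / ?s - 2 * w $ i * w $ j / ?s + 4 * w $ i * w $ j / (?s * ?s) * ?s"
    using i j w by (simp add: scalar_prod_def if_distrib cong: if_cong)
  also have "\<dots> = ?d i j" using s by (simp add: field_simps)
  finally show "(householder_mat w * householder_mat w) $$ (i,j) = 1\<^sub>m n $$ (i,j)" using i j by simp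
qed (use w in \<open>auto simp: householder_mat_def\<close>)

lemma householder_mat_col_0:
  fixes u :: "real vec"
  assumes u: "u \<in> carrier_vec n" and uu: "u \<bullet> u = 1" and n: "0 < n" and u0: "u $ 0 \<le> 0"
  shows "col (householder_mat (unit_vec n 0 - u)) 0 = u"
proof (rule eq_vecI)
  let ?w = "unit_vec n 0 - u"
  \<comment> \<open>\<open>w \<bullet> w = 2 - 2 u\<^sub>0 = 2 w\<^sub>0\<close>, so the reflection sends \<open>e\<^sub>0\<close> to \<open>e\<^sub>0 - w = u\<close>\<close>
  have ww: "?w \<bullet> ?w = 2 * (1 - u $ 0)"
    using u uu n by (simp add: minus_scalar_prod_distrib[of _ n] scalar_prod_minus_distrib[of _ n])
  fix i assume "i < dim_vec u"
  then have i: "i < n" using u by simp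
  have "col (householder_mat ?w) 0 $ i = (if i = 0 then 1 else 0) - 2 * ?w $ i * (1 - u $ 0) / (2 * (1 - u $ 0))"
    using i n u ww by (simp add: householder_mat_def)
  also have "\<dots> = u $ i" using i n u u0 by (simp add: field_simps)
  finally show "col (householder_mat ?w) 0 $ i = u $ i" .
qed (use u in \<open>simp add: householder_mat_def\<close>)

lemma householder_reflection:
  fixes u :: "real vec"
  assumes u: "u \<in> carrier_vec (Suc m)" "u \<bullet> u = 1" "u $ 0 \<le> 0"
  obtains H where "H \<in> carrier_mat (Suc m) (Suc m)" "transpose_mat H = H" "H * H = 1\<^sub>m (Suc m)"
    "col H 0 = u" "H *\<^sub>v u = unit_vec (Suc m) 0"
proof -
  let ?n = "Suc m" and ?w = "unit_vec (Suc m) 0 - u"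
  define H where "H = householder_mat ?w"
  have w: "?w \<in> carrier_vec ?n" using u by simp
  have H: "H \<in> carrier_mat ?n ?n" unfolding H_def using householder_mat_carrier[of ?w] u by simp
  have "?w $ 0 \<noteq> 0" using u by simp
  then have "?w \<noteq> 0\<^sub>v ?n" by auto
  then have HH: "H * H = 1\<^sub>m ?n"
    unfolding H_def using householder_mat_involution[OF w] scalar_prod_self_pos[OF w] by simp
  have Hcol: "col H 0 = u" unfolding H_def by (rule householder_mat_col_0[OF u(1,2)]) (use u in simp_all)
  have "H *\<^sub>v u = unit_vec ?n 0" using col_mult2[OF H H, of 0] HH Hcol by simp
  then show ?thesis using that H HH Hcol householder_mat_sym unfolding H_def by blast
qed

lemma householder_deflation:
  fixes A :: "real mat"
  assumes A: "A \<in> carrier_mat (Suc m) (Suc m)" and sym: "transpose_mat A = A"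
    and u: "u \<in> carrier_vec (Suc m)" "u \<bullet> u = 1" "u $ 0 \<le> 0" and Au: "A *\<^sub>v u = lam \<cdot>\<^sub>v u"
  obtains H B where "H \<in> carrier_mat (Suc m) (Suc m)" "transpose_mat H * H = 1\<^sub>m (Suc m)"
    "B \<in> carrier_mat m m" "transpose_mat B = B"
    "A = H * four_block_mat (mat_diag 1 (\<lambda>_. lam)) (0\<^sub>m 1 m) (0\<^sub>m m 1) B * transpose_mat H"
proof -
  let ?n = "Suc m"
  obtain H where H: "H \<in> carrier_mat ?n ?n" and Ht: "transpose_mat H = H" and HH: "H * H = 1\<^sub>m ?n"
    and Hcol: "col H 0 = u" and Hu: "H *\<^sub>v u = unit_vec ?n 0"
    using householder_reflection[OF u] by blast
  define C where "C = H * A * H"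
  have HA: "H * A \<in> carrier_mat ?n ?n" and C: "C \<in> carrier_mat ?n ?n" unfolding C_def using H A by auto
  have "transpose_mat C = transpose_mat H * transpose_mat (H * A)"
    unfolding C_def by (rule transpose_mult[OF HA H])
  also have "\<dots> = C" unfolding C_def using H A sym Ht
    by (simp add: transpose_mult[OF H A] assoc_mult_mat[of _ ?n ?n _ ?n _ ?n])
  finally have Csym: "transpose_mat C = C" .
  have "col C 0 = H *\<^sub>v (A *\<^sub>v u)"
    unfolding C_def using col_mult2[OF HA H, of 0] Hcol H A u by simp
  also have "\<dots> = lam \<cdot>\<^sub>v unit_vec ?n 0" unfolding Au using mult_mat_vec[OF H u(1)] Hu by simp
  finally have col0: "col C 0 = lam \<cdot>\<^sub>v unit_vec ?n 0" .
  have Ccol: "C $$ (i,0) = (if i = 0 then lam else 0)" if "i < ?n" for i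
    using arg_cong[OF col0, of "\<lambda>v. v $ i"] that C by auto
  have Csym_entry: "C $$ (i,j) = C $$ (j,i)" if "i < ?n" "j < ?n" for i j
    using arg_cong[OF Csym, of "\<lambda>X. X $$ (j,i)"] that C by auto
  have Crow: "C $$ (0,j) = (if j = 0 then lam else 0)" if "j < ?n" for j
    using Ccol[OF that] Csym_entry[OF _ that] by simp
  define B where "B = mat m m (\<lambda>(i,j). C $$ (Suc i, Suc j))"
  have B: "B \<in> carrier_mat m m" unfolding B_def by simp
  have Bsym: "transpose_mat B = B"
    unfolding B_def using C by (intro eq_matI) (auto simp: Csym_entry)
  have "C = four_block_mat (mat_diag 1 (\<lambda>_. lam)) (0\<^sub>m 1 m) (0\<^sub>m m 1) B"
    using C by (intro eq_matI) (auto simp: Ccol Crow B_def mat_diag_def)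
  moreover have "H * C * transpose_mat H = (H * H) * A * (H * H)"
    unfolding C_def Ht using H A by (simp add: assoc_mult_mat[of _ ?n ?n _ ?n _ ?n])
  then have "A = H * C * transpose_mat H" using HH A by simp
  moreover have "transpose_mat H * H = 1\<^sub>m ?n" using Ht HH by simp
  ultimately show ?thesis using that H B Bsym by simp
qed

lemma eigenvalue_of_spectral_decomp:
  fixes A V :: "real mat"
  assumes V: "V \<in> carrier_mat n n" and VV: "transpose_mat V * V = 1\<^sub>m n"
    and A: "A = V * mat_diag n d * transpose_mat V" and j: "j < n"
  shows "eigenvalue A (d j)"
proof -
  have D: "mat_diag n d \<in> carrier_mat n n" by simp
  have A_carrier: "A \<in> carrier_mat n n"
    unfolding A using V by (metis mat_diag_dim mult_carrier_mat transpose_carrier_mat)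
  have Vx: "transpose_mat V *\<^sub>v col V j = unit_vec n j"
    using col_mult2[of "transpose_mat V" n n V n j] V j VV by simp
  have Du: "mat_diag n d *\<^sub>v unit_vec n j = d j \<cdot>\<^sub>v unit_vec n j"
    using j by (intro eq_vecI) (auto simp: mat_diag_def scalar_prod_def unit_vec_def if_distrib cong: if_cong)
  have VD: "V * mat_diag n d \<in> carrier_mat n n" using mult_carrier_mat[OF V D] .
  have x: "col V j \<in> carrier_vec n" and Vt: "transpose_mat V \<in> carrier_mat n n" using V by auto
  have "A *\<^sub>v col V j = V *\<^sub>v (mat_diag n d *\<^sub>v (transpose_mat V *\<^sub>v col V j))"
    unfolding A using assoc_mult_mat_vec[OF VD Vt x] assoc_mult_mat_vec[OF V D] Vt x by simp
  also have "\<dots> = d j \<cdot>\<^sub>v col V j"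
    unfolding Vx Du using V j mult_mat_vec[OF V] col_mult2[of V n n "1\<^sub>m n" n j] by simp
  finally have "A *\<^sub>v col V j = d j \<cdot>\<^sub>v col V j" .
  moreover have "col V j \<bullet> col V j = 1" using arg_cong[OF VV, of "\<lambda>X. X $$ (j,j)"] V j by simp
  then have "col V j \<noteq> 0\<^sub>v n" using V by auto
  ultimately show ?thesis using x A_carrier unfolding eigenvalue_def eigenvector_def by auto
qed

lemma mult_block_diag_mat:
  assumes "A \<in> carrier_mat p p" "A' \<in> carrier_mat p p" "B \<in> carrier_mat q q" "B' \<in> carrier_mat q q"
  shows "four_block_mat A (0\<^sub>m p q) (0\<^sub>m q p) B * four_block_mat A' (0\<^sub>m p q) (0\<^sub>m q p) B'
    = four_block_mat (A * A') (0\<^sub>m p q) (0\<^sub>m q p) (B * B')"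
  using assms by (subst mult_four_block_mat[of _ p p _ q _ q _ _ p _ q]) auto

lemma transpose_block_diag_mat:
  assumes "A \<in> carrier_mat p p" "B \<in> carrier_mat q q"
  shows "transpose_mat (four_block_mat A (0\<^sub>m p q) (0\<^sub>m q p) B)
    = four_block_mat (transpose_mat A) (0\<^sub>m p q) (0\<^sub>m q p) (transpose_mat B)"
  using assms by (simp add: transpose_four_block_mat[of _ p p _ q _ q])

lemma mat_diag_Suc_block_diag:
  "mat_diag (Suc m) d = four_block_mat (mat_diag 1 (\<lambda>_. d 0)) (0\<^sub>m 1 m) (0\<^sub>m m 1) (mat_diag m (\<lambda>j. d (Suc j)))"
  by (rule eq_matI) (auto simp: mat_diag_def)

lemma block_diag_spectral_decomp:
  fixes V' :: "real mat"
  assumes V': "V' \<in> carrier_mat m m" "transpose_mat V' * V' = 1\<^sub>m m"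
  defines "W \<equiv> four_block_mat (1\<^sub>m 1) (0\<^sub>m 1 m) (0\<^sub>m m 1) V'"
  shows "W \<in> carrier_mat (Suc m) (Suc m)" "transpose_mat W * W = 1\<^sub>m (Suc m)"
    "four_block_mat (mat_diag 1 (\<lambda>_. lam)) (0\<^sub>m 1 m) (0\<^sub>m m 1) (V' * mat_diag m d' * transpose_mat V')
      = W * mat_diag (Suc m) (\<lambda>j. if j = 0 then lam else d' (j - 1)) * transpose_mat W"
proof -
  show "W \<in> carrier_mat (Suc m) (Suc m)" unfolding W_def using V' by auto
  show "transpose_mat W * W = 1\<^sub>m (Suc m)"
    unfolding W_def using V' by (simp add: transpose_block_diag_mat mult_block_diag_mat)
  have D': "mat_diag m d' \<in> carrier_mat m m" and D1: "mat_diag 1 (\<lambda>_. lam) \<in> carrier_mat 1 1" by auto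
  have "mat_diag (Suc m) (\<lambda>j. if j = 0 then lam else d' (j - 1))
      = four_block_mat (mat_diag 1 (\<lambda>_. lam)) (0\<^sub>m 1 m) (0\<^sub>m m 1) (mat_diag m d')"
    unfolding mat_diag_Suc_block_diag by simp
  then have "W * mat_diag (Suc m) (\<lambda>j. if j = 0 then lam else d' (j - 1))
      = four_block_mat (1\<^sub>m 1 * mat_diag 1 (\<lambda>_. lam)) (0\<^sub>m 1 m) (0\<^sub>m m 1) (V' * mat_diag m d')"
    unfolding W_def by (simp only: mult_block_diag_mat[OF one_carrier_mat D1 V'(1) D'])
  also have "1\<^sub>m 1 * mat_diag 1 (\<lambda>_. lam) = mat_diag 1 (\<lambda>_. lam)" by (rule left_mult_one_mat[OF D1])
  finally have WD: "W * mat_diag (Suc m) (\<lambda>j. if j = 0 then lam else d' (j - 1))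
      = four_block_mat (mat_diag 1 (\<lambda>_. lam)) (0\<^sub>m 1 m) (0\<^sub>m m 1) (V' * mat_diag m d')" .
  have "W * mat_diag (Suc m) (\<lambda>j. if j = 0 then lam else d' (j - 1)) * transpose_mat W
      = four_block_mat (mat_diag 1 (\<lambda>_. lam)) (0\<^sub>m 1 m) (0\<^sub>m m 1) (V' * mat_diag m d')
        * four_block_mat (1\<^sub>m 1) (0\<^sub>m 1 m) (0\<^sub>m m 1) (transpose_mat V')"
    unfolding WD unfolding W_def using transpose_block_diag_mat[OF one_carrier_mat V'(1)] by simp
  also have "\<dots> = four_block_mat (mat_diag 1 (\<lambda>_. lam) * 1\<^sub>m 1) (0\<^sub>m 1 m) (0\<^sub>m m 1)
      (V' * mat_diag m d' * transpose_mat V')"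
    using V'(1) by (intro mult_block_diag_mat[OF D1 one_carrier_mat]) auto
  also have "mat_diag 1 (\<lambda>_. lam) * 1\<^sub>m 1 = mat_diag 1 (\<lambda>_. lam)" by (rule right_mult_one_mat[OF D1])
  finally show "four_block_mat (mat_diag 1 (\<lambda>_. lam)) (0\<^sub>m 1 m) (0\<^sub>m m 1) (V' * mat_diag m d' * transpose_mat V')
      = W * mat_diag (Suc m) (\<lambda>j. if j = 0 then lam else d' (j - 1)) * transpose_mat W" ..
qed

lemma mult_conjugate_assoc:
  fixes H W D :: "real mat"
  assumes H: "H \<in> carrier_mat n n" and W: "W \<in> carrier_mat n n" and D: "D \<in> carrier_mat n n"
  shows "H * (W * D * transpose_mat W) * transpose_mat H = (H * W) * D * transpose_mat (H * W)"
proof -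
  have c: "W * D \<in> carrier_mat n n" "W * D * transpose_mat W \<in> carrier_mat n n"
    "H * W \<in> carrier_mat n n" "H * W * D \<in> carrier_mat n n"
    "transpose_mat W * transpose_mat H \<in> carrier_mat n n"
    using H W D by (metis mult_carrier_mat transpose_carrier_mat)+
  show ?thesis using H W D c
    by (simp add: transpose_mult[OF H W] assoc_mult_mat[of _ n n _ n _ n])
qed

lemma sorted_prepend_max:
  fixes d :: "nat \<Rightarrow> real"
  assumes sorted: "\<forall>i j. i \<le> j \<longrightarrow> j < m \<longrightarrow> d j \<le> d i" and max: "0 < m \<Longrightarrow> d 0 \<le> lam"
    and ij: "i \<le> j" "j < Suc m"
  shows "(if j = 0 then lam else d (j - 1)) \<le> (if i = 0 then lam else d (i - 1))"
proof (cases "j = 0")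
  case False
  then have "d (j - 1) \<le> d 0" "d 0 \<le> lam" using sorted max ij by auto
  moreover have "d (j - 1) \<le> d (i - 1)" if "i \<noteq> 0" using sorted ij that by simp
  ultimately show ?thesis using False by simp
qed (use ij in simp)

lemma sym_mat_spectral_decomp_sorted:
  fixes A :: "real mat"
  assumes "A \<in> carrier_mat n n" "transpose_mat A = A"
  shows "\<exists>d V. V \<in> carrier_mat n n \<and> transpose_mat V * V = 1\<^sub>m n \<and>
     A = V * mat_diag n d * transpose_mat V \<and> (\<forall>i j. i \<le> j \<longrightarrow> j < n \<longrightarrow> d j \<le> d i)"
  using assms
proof (induction n arbitrary: A)
  case 0
  then have "A = 1\<^sub>m 0 * mat_diag 0 (\<lambda>_. 0) * transpose_mat (1\<^sub>m 0)" by (intro eq_matI) auto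
  then show ?case by (intro exI[of _ "\<lambda>_. 0"] exI[of _ "1\<^sub>m 0"]) auto
next
  case (Suc m)
  note A = Suc.prems(1) and sym = Suc.prems(2)
  obtain lam u where u: "u \<in> carrier_vec (Suc m)" "u \<bullet> u = 1" "u $ 0 \<le> 0"
    and Au: "A *\<^sub>v u = lam \<cdot>\<^sub>v u" and max: "\<And>e. eigenvalue A e \<Longrightarrow> e \<le> lam"
    using sym_mat_max_eigenpair[OF A sym] by blast
  obtain H B where H: "H \<in> carrier_mat (Suc m) (Suc m)" "transpose_mat H * H = 1\<^sub>m (Suc m)"
    and B: "B \<in> carrier_mat m m" "transpose_mat B = B"
    and AHB: "A = H * four_block_mat (mat_diag 1 (\<lambda>_. lam)) (0\<^sub>m 1 m) (0\<^sub>m m 1) B * transpose_mat H"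
    using householder_deflation[OF A sym u Au] by blast
  obtain d' V' where V': "V' \<in> carrier_mat m m" "transpose_mat V' * V' = 1\<^sub>m m"
    and BV': "B = V' * mat_diag m d' * transpose_mat V'"
    and sorted': "\<forall>i j. i \<le> j \<longrightarrow> j < m \<longrightarrow> d' j \<le> d' i"
    using Suc.IH[OF B] by blast
  define W where "W = four_block_mat (1\<^sub>m 1) (0\<^sub>m 1 m) (0\<^sub>m m 1) V'"
  define d where "d = (\<lambda>j. if j = 0 then lam else d' (j - 1))"
  define V where "V = H * W"
  have W: "W \<in> carrier_mat (Suc m) (Suc m)" "transpose_mat W * W = 1\<^sub>m (Suc m)"
    using block_diag_spectral_decomp(1,2)[OF V'] unfolding W_def by auto
  have "four_block_mat (mat_diag 1 (\<lambda>_. lam)) (0\<^sub>m 1 m) (0\<^sub>m m 1) B = W * mat_diag (Suc m) d * transpose_mat W"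
    using block_diag_spectral_decomp(3)[OF V', where lam = lam and d' = d'] unfolding W_def d_def BV' .
  then have "A = V * mat_diag (Suc m) d * transpose_mat V"
    unfolding AHB V_def using mult_conjugate_assoc[OF H(1) W(1) mat_diag_dim] by simp
  moreover have VV: "transpose_mat V * V = 1\<^sub>m (Suc m)"
    unfolding V_def by (rule orthonormal_cols_mult[OF H W(1,2)])
  moreover have "d j \<le> d i" if ij: "i \<le> j" "j < Suc m" for i j
  proof -
    have "d' 0 \<le> lam" if m: "0 < m"
    proof -
      have "eigenvalue A (d 1)"
        using eigenvalue_of_spectral_decomp[OF _ VV \<open>A = V * mat_diag (Suc m) d * transpose_mat V\<close>]
          mult_carrier_mat[OF H(1) W(1)] m by (simp add: V_def)
      then show ?thesis using max by (simp add: d_def)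
    qed
    then show ?thesis unfolding d_def by (rule sorted_prepend_max[OF sorted' _ ij])
  qed
  moreover have "V \<in> carrier_mat (Suc m) (Suc m)" unfolding V_def by (rule mult_carrier_mat[OF H(1) W(1)])
  ultimately show ?case by (intro exI[of _ d] exI[of _ V]) auto
qed

section \<open>Courant--Fischer\<close>

definition sorted_eigen_decomp :: "real mat \<Rightarrow> nat \<Rightarrow> real mat \<Rightarrow> (nat \<Rightarrow> real) \<Rightarrow> bool" where
  "sorted_eigen_decomp B m V d \<longleftrightarrow> B \<in> carrier_mat m m \<and> V \<in> carrier_mat m m \<and>
     transpose_mat V * V = 1\<^sub>m m \<and> B = V * mat_diag m (\<lambda>j. d (j + 1)) * transpose_mat V \<and>
     (\<forall>i j. 1 \<le> i \<longrightarrow> i \<le> j \<longrightarrow> j \<le> m \<longrightarrow> d j \<le> d i)"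

lemma sorted_eigen_decompD:
  assumes "sorted_eigen_decomp B m V d"
  shows "B \<in> carrier_mat m m" "V \<in> carrier_mat m m" "transpose_mat V * V = 1\<^sub>m m"
    "V * transpose_mat V = 1\<^sub>m m" "B = V * mat_diag m (\<lambda>j. d (j + 1)) * transpose_mat V"
    "\<And>i j. 1 \<le> i \<Longrightarrow> i \<le> j \<Longrightarrow> j \<le> m \<Longrightarrow> d j \<le> d i"
  using assms unfolding sorted_eigen_decomp_def
  by (auto intro: mat_mult_left_right_inverse[of "transpose_mat V" m V])

lemma sym_eig_sorted_eigen_decomp:
  assumes B: "B \<in> carrier_mat m m" and sym: "transpose_mat B = B"
  shows "\<exists>V. sorted_eigen_decomp B m V (sym_eig B)"
proof -
  define P where "P = (\<lambda>d. (\<forall>i j. 1 \<le> i \<longrightarrow> i \<le> j \<longrightarrow> j \<le> dim_row B \<longrightarrow> d j \<le> d i) \<and>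
     (\<exists>V \<in> carrier_mat (dim_row B) (dim_row B). transpose_mat V * V = 1\<^sub>m (dim_row B) \<and>
        B = V * mat_diag (dim_row B) (\<lambda>j. d (j + 1)) * transpose_mat V))"
  obtain d V where "V \<in> carrier_mat m m" "transpose_mat V * V = 1\<^sub>m m"
    "B = V * mat_diag m d * transpose_mat V" "\<forall>i j. i \<le> j \<longrightarrow> j < m \<longrightarrow> d j \<le> d i"
    using sym_mat_spectral_decomp_sorted[OF B sym] by blast
  then have "P (\<lambda>j. d (j - 1))" unfolding P_def using B by (auto intro!: bexI[of _ V])
  then have "P (sym_eig B)" unfolding sym_eig_def P_def[symmetric] by (rule someI[of P])
  then show ?thesis unfolding P_def sorted_eigen_decomp_def using B by auto
qed

lemma sorted_eigen_decomp_mult_vec: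
  assumes E: "sorted_eigen_decomp B m V d" and w: "w \<in> carrier_vec m"
  shows "(V *\<^sub>v w) \<bullet> (B *\<^sub>v (V *\<^sub>v w)) = (\<Sum>r\<in>{0..<m}. d (r + 1) * (w $ r)\<^sup>2)"
proof -
  note E' = sorted_eigen_decompD[OF E]
  let ?D = "mat_diag m (\<lambda>j. d (j + 1))"
  have VD: "V * ?D \<in> carrier_mat m m" using mult_carrier_mat[OF E'(2) mat_diag_dim] .
  have Vt: "transpose_mat V \<in> carrier_mat m m" using E'(2) by simp
  have "B *\<^sub>v (V *\<^sub>v w) = (V * ?D) *\<^sub>v (transpose_mat V *\<^sub>v (V *\<^sub>v w))"
    using assoc_mult_mat_vec[OF VD Vt, of "V *\<^sub>v w"] E'(2,5) w by simp
  also have "transpose_mat V *\<^sub>v (V *\<^sub>v w) = w"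
    using E'(2,3) w by (simp add: assoc_mult_mat_vec[of _ m m _ m, symmetric])
  also have "(V * ?D) *\<^sub>v w = V *\<^sub>v (?D *\<^sub>v w)" by (rule assoc_mult_mat_vec[OF E'(2) mat_diag_dim w])
  finally have "(V *\<^sub>v w) \<bullet> (B *\<^sub>v (V *\<^sub>v w)) = w \<bullet> (?D *\<^sub>v w)"
    using orthonormal_cols_scalar_prod[OF E'(2,3) w mult_mat_vec_carrier[OF mat_diag_dim w]] by simp
  also have "\<dots> = (\<Sum>r\<in>{0..<m}. d (r + 1) * (w $ r)\<^sup>2)"
    using w by (simp add: mat_diag_mult_vec scalar_prod_def power2_eq_square mult_ac)
  finally show ?thesis .
qed

lemma sorted_eigen_decomp_sq:
  assumes E: "sorted_eigen_decomp A n U lam" and nonneg: "\<And>j. 1 \<le> j \<Longrightarrow> j \<le> n \<Longrightarrow> 0 \<le> lam j"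
  shows "sorted_eigen_decomp (A * A) n U (\<lambda>j. (lam j)\<^sup>2)"
proof -
  note E' = sorted_eigen_decompD[OF E]
  have "A * A = U * mat_diag n (\<lambda>j. lam (j + 1) * lam (j + 1)) * transpose_mat U"
    using mat_diag_conjugate_mult[OF E'(2,3)] E'(5) by simp
  then have "A * A = U * mat_diag n (\<lambda>j. (lam (j + 1))\<^sup>2) * transpose_mat U"
    by (simp add: power2_eq_square)
  moreover have "(lam j)\<^sup>2 \<le> (lam i)\<^sup>2" if "1 \<le> i" "i \<le> j" "j \<le> n" for i j
    using E'(6)[OF that] nonneg[of j] that by (intro power_mono) auto
  ultimately show ?thesis using E' unfolding sorted_eigen_decomp_def by auto
qed

lemma sorted_eigen_decomp_head_ge:
  assumes E: "sorted_eigen_decomp A n U lam" and nonneg: "\<And>j. 1 \<le> j \<Longrightarrow> j \<le> n \<Longrightarrow> 0 \<le> lam j"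
    and w: "w \<in> carrier_vec n" and i: "1 \<le> i" "i \<le> n"
  shows "lam i * (\<Sum>r\<in>{0..<i}. (w $ r)\<^sup>2) \<le> (U *\<^sub>v w) \<bullet> (A *\<^sub>v (U *\<^sub>v w))"
proof -
  have "lam i * (\<Sum>r\<in>{0..<i}. (w $ r)\<^sup>2) \<le> (\<Sum>r\<in>{0..<i}. lam (r + 1) * (w $ r)\<^sup>2)"
    unfolding sum_distrib_left using sorted_eigen_decompD(6)[OF E] i
    by (intro sum_mono mult_right_mono) auto
  also have "\<dots> \<le> (\<Sum>r\<in>{0..<n}. lam (r + 1) * (w $ r)\<^sup>2)"
    using i nonneg by (intro sum_mono2) auto
  also have "\<dots> = (U *\<^sub>v w) \<bullet> (A *\<^sub>v (U *\<^sub>v w))"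
    by (rule sorted_eigen_decomp_mult_vec[symmetric, OF E w])
  finally show ?thesis .
qed

lemma sorted_eigen_decomp_tail_le:
  assumes E: "sorted_eigen_decomp A n U lam" and w: "w \<in> carrier_vec n"
    and head: "\<And>r. r < k \<Longrightarrow> w $ r = 0"
  shows "(U *\<^sub>v w) \<bullet> (A *\<^sub>v (U *\<^sub>v w)) \<le> lam (k + 1) * (\<Sum>l\<in>{0..<n - k}. (w $ (k + l))\<^sup>2)"
proof -
  have "(U *\<^sub>v w) \<bullet> (A *\<^sub>v (U *\<^sub>v w)) = (\<Sum>r\<in>{0..<n}. lam (r + 1) * (w $ r)\<^sup>2)"
    by (rule sorted_eigen_decomp_mult_vec[OF E w])
  also have "\<dots> = (\<Sum>r\<in>{k..<n}. lam (r + 1) * (w $ r)\<^sup>2)"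
    using head by (intro sum.mono_neutral_right) auto
  also have "\<dots> = (\<Sum>l\<in>{0..<n - k}. lam (k + l + 1) * (w $ (k + l))\<^sup>2)"
    by (simp add: sum.atLeastLessThan_shift_0[of _ k n] comp_def)
  also have "\<dots> \<le> (\<Sum>l\<in>{0..<n - k}. lam (k + 1) * (w $ (k + l))\<^sup>2)"
  proof (rule sum_mono)
    fix l assume "l \<in> {0..<n - k}"
    then show "lam (k + l + 1) * (w $ (k + l))\<^sup>2 \<le> lam (k + 1) * (w $ (k + l))\<^sup>2"
      using sorted_eigen_decompD(6)[OF E, of "k + 1" "k + l + 1"] by (simp add: mult_right_mono)
  qed
  finally show ?thesis by (simp add: sum_distrib_left)
qed

lemma leading_cols_mult_vec:
  assumes V: "V \<in> carrier_mat m m" and y: "y \<in> carrier_vec p" and p: "p \<le> m"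
  shows "mat m p (\<lambda>(r, c). V $$ (r, c)) *\<^sub>v y = V *\<^sub>v vec m (\<lambda>r. if r < p then y $ r else 0)"
proof (rule eq_vecI)
  fix r assume "r < dim_vec (V *\<^sub>v vec m (\<lambda>r. if r < p then y $ r else 0))"
  then have r: "r < m" using V by simp
  have "(\<Sum>k\<in>{0..<m}. V $$ (r, k) * (if k < p then y $ k else 0)) = (\<Sum>k\<in>{0..<p}. V $$ (r, k) * y $ k)"
    using p by (intro sum.mono_neutral_cong_right) auto
  then show "(mat m p (\<lambda>(r, c). V $$ (r, c)) *\<^sub>v y) $ r = (V *\<^sub>v vec m (\<lambda>r. if r < p then y $ r else 0)) $ r"
    using r V y by (simp add: scalar_prod_def)
qed (use V in simp)

lemma leading_cols_orthonormal:
  assumes V: "V \<in> carrier_mat m m" and VV: "transpose_mat V * V = 1\<^sub>m m" and p: "p \<le> m"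
  shows "transpose_mat (mat m p (\<lambda>(r, c). V $$ (r, c))) * mat m p (\<lambda>(r, c). V $$ (r, c)) = 1\<^sub>m p"
proof (rule eq_matI)
  fix a b assume "a < dim_row (1\<^sub>m p)" "b < dim_col (1\<^sub>m p)"
  then have a: "a < m" "a < p" and b: "b < m" "b < p" using p by auto
  have "(transpose_mat (mat m p (\<lambda>(r, c). V $$ (r, c))) * mat m p (\<lambda>(r, c). V $$ (r, c))) $$ (a, b)
      = (transpose_mat V * V) $$ (a, b)"
    using a b V by (simp add: scalar_prod_def)
  then show "(transpose_mat (mat m p (\<lambda>(r, c). V $$ (r, c))) * mat m p (\<lambda>(r, c). V $$ (r, c))) $$ (a, b)
      = 1\<^sub>m p $$ (a, b)" using VV a b by simp
qed auto

lemma courant_fischer_witness: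
  assumes E: "sorted_eigen_decomp B m V d" and p: "1 \<le> p" "p \<le> m" and y: "y \<in> carrier_vec p"
  shows "d p * (y \<bullet> y)
    \<le> (mat m p (\<lambda>(r, c). V $$ (r, c)) *\<^sub>v y) \<bullet> (B *\<^sub>v (mat m p (\<lambda>(r, c). V $$ (r, c)) *\<^sub>v y))"
proof -
  note E' = sorted_eigen_decompD[OF E]
  let ?w = "vec m (\<lambda>r. if r < p then y $ r else 0)"
  have "d p * (y \<bullet> y) = (\<Sum>r\<in>{0..<p}. d p * (y $ r)\<^sup>2)"
    using y by (simp add: scalar_prod_self_sum_squares sum_distrib_left)
  also have "\<dots> \<le> (\<Sum>r\<in>{0..<p}. d (r + 1) * (y $ r)\<^sup>2)"
    using E'(6) p by (intro sum_mono mult_right_mono) auto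
  also have "\<dots> = (\<Sum>r\<in>{0..<m}. d (r + 1) * (?w $ r)\<^sup>2)"
    using p by (intro sum.mono_neutral_cong_left) auto
  also have "\<dots> = (mat m p (\<lambda>(r, c). V $$ (r, c)) *\<^sub>v y) \<bullet> (B *\<^sub>v (mat m p (\<lambda>(r, c). V $$ (r, c)) *\<^sub>v y))"
    using sorted_eigen_decomp_mult_vec[OF E, of ?w] leading_cols_mult_vec[OF E'(2) y p(2)] by simp
  finally show ?thesis .
qed

lemma courant_fischer_bound:
  assumes E: "sorted_eigen_decomp B m V d" and p: "1 \<le> p" "p \<le> m"
    and X: "X \<in> carrier_mat m p" and XX: "transpose_mat X * X = 1\<^sub>m p"
    and t: "\<And>y. y \<in> carrier_vec p \<Longrightarrow> t * (y \<bullet> y) \<le> (X *\<^sub>v y) \<bullet> (B *\<^sub>v (X *\<^sub>v y))"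
  shows "t \<le> d p"
proof -
  note E' = sorted_eigen_decompD[OF E]
  have Vt: "transpose_mat V \<in> carrier_mat m m" using E'(2) by simp
  let ?W = "transpose_mat V * X"
  have W: "?W \<in> carrier_mat m p" using mult_carrier_mat[OF Vt X] .
  \<comment> \<open>choose \<open>X y\<close> orthogonal to the leading \<open>p - 1\<close> eigenvectors\<close>
  obtain y where y: "y \<in> carrier_vec p" "y \<noteq> 0\<^sub>v p"
    and Ry: "mat (p - 1) p (\<lambda>(r, c). ?W $$ (r, c)) *\<^sub>v y = 0\<^sub>v (p - 1)"
    using mat_mult_vec_nontrivial_kernel[of "mat (p - 1) p (\<lambda>(r, c). ?W $$ (r, c))" "p - 1" p] p by auto
  define w where "w = ?W *\<^sub>v y"
  have w: "w \<in> carrier_vec m" unfolding w_def using W y by simp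
  have w0: "w $ r = 0" if "r < p - 1" for r
    using arg_cong[OF Ry, of "\<lambda>v. v $ r"] index_mult_mat_vec_sum[OF W y(1), of r] that p y(1)
    by (simp add: w_def scalar_prod_def)
  have "V *\<^sub>v w = (V * transpose_mat V) *\<^sub>v (X *\<^sub>v y)"
    unfolding w_def using E'(2) Vt X y by (simp add: assoc_mult_mat_vec[of _ m m _ p])
  then have Xy: "X *\<^sub>v y = V *\<^sub>v w" using E'(4) X y by simp
  have "w \<bullet> w = y \<bullet> y"
    using orthonormal_cols_scalar_prod[OF E'(2,3) w w] orthonormal_cols_scalar_prod[OF X XX y(1) y(1)]
    unfolding Xy by simp
  have "(X *\<^sub>v y) \<bullet> (B *\<^sub>v (X *\<^sub>v y)) = (\<Sum>r\<in>{0..<m}. d (r + 1) * (w $ r)\<^sup>2)"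
    unfolding Xy by (rule sorted_eigen_decomp_mult_vec[OF E w])
  also have "\<dots> \<le> (\<Sum>r\<in>{0..<m}. d p * (w $ r)\<^sup>2)"
  proof (rule sum_mono)
    fix r assume "r \<in> {0..<m}"
    then show "d (r + 1) * (w $ r)\<^sup>2 \<le> d p * (w $ r)\<^sup>2"
      using w0[of r] E'(6)[of p "r + 1"] p by (cases "r < p - 1") (auto intro: mult_right_mono)
  qed
  also have "\<dots> = d p * (w \<bullet> w)" using w by (simp add: scalar_prod_self_sum_squares sum_distrib_left)
  also have "\<dots> = d p * (y \<bullet> y)" using \<open>w \<bullet> w = y \<bullet> y\<close> by simp
  finally have "t * (y \<bullet> y) \<le> d p * (y \<bullet> y)" using t[OF y(1)] by linarith
  then show ?thesis using scalar_prod_self_pos[OF y] by simp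
qed

lemma sym_eig_le_compression:
  assumes E: "sorted_eigen_decomp B m V b" and C: "C \<in> carrier_mat p p" "transpose_mat C = C"
    and F: "F \<in> carrier_mat m p" "transpose_mat F * F = 1\<^sub>m p"
    and le: "\<And>w. w \<in> carrier_vec p \<Longrightarrow> w \<bullet> (C *\<^sub>v w) \<le> (F *\<^sub>v w) \<bullet> (B *\<^sub>v (F *\<^sub>v w))"
    and i: "1 \<le> i" "i \<le> p" and pm: "p \<le> m"
  shows "sym_eig C i \<le> b i"
proof -
  obtain W where EC: "sorted_eigen_decomp C p W (sym_eig C)"
    using sym_eig_sorted_eigen_decomp[OF C] by blast
  define X where "X = mat p i (\<lambda>(r, c). W $$ (r, c))"
  have X: "X \<in> carrier_mat p i" "transpose_mat X * X = 1\<^sub>m i"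
    unfolding X_def using leading_cols_orthonormal[OF sorted_eigen_decompD(2,3)[OF EC] i(2)] by auto
  note Xw = courant_fischer_witness[OF EC i, folded X_def]
  show ?thesis
  proof (rule courant_fischer_bound[OF E i(1) _ mult_carrier_mat[OF F(1) X(1)] orthonormal_cols_mult[OF F X]])
    show "i \<le> m" using i pm by simp
    fix y :: "real vec" assume y: "y \<in> carrier_vec i"
    have "(F * X) *\<^sub>v y = F *\<^sub>v (X *\<^sub>v y)" using F X y by simp
    then show "sym_eig C i * (y \<bullet> y) \<le> ((F * X) *\<^sub>v y) \<bullet> (B *\<^sub>v ((F * X) *\<^sub>v y))"
      using Xw[OF y] le[of "X *\<^sub>v y"] X y by fastforce
  qed
qed

lemma sym_eig_nonneg:
  assumes B: "B \<in> carrier_mat m m" "transpose_mat B = B"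
    and psd: "\<And>v. v \<in> carrier_vec m \<Longrightarrow> 0 \<le> v \<bullet> (B *\<^sub>v v)" and i: "1 \<le> i" "i \<le> m"
  shows "0 \<le> sym_eig B i"
proof -
  obtain V where E: "sorted_eigen_decomp B m V (sym_eig B)" using sym_eig_sorted_eigen_decomp[OF B] by blast
  note E' = sorted_eigen_decompD[OF E]
  show ?thesis
  proof (rule courant_fischer_bound[OF E i _ leading_cols_orthonormal[OF E'(2,3) i(2)]])
    fix y :: "real vec" assume "y \<in> carrier_vec i"
    then have "mat m i (\<lambda>(r, c). V $$ (r, c)) *\<^sub>v y \<in> carrier_vec m"
      by (intro mult_mat_vec_carrier) auto
    then show "0 * (y \<bullet> y) \<le> (mat m i (\<lambda>(r, c). V $$ (r, c)) *\<^sub>v y) \<bullet>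
        (B *\<^sub>v (mat m i (\<lambda>(r, c). V $$ (r, c)) *\<^sub>v y))"
      using psd by simp
  qed simp
qed

lemma sym_eig_sq_le:
  assumes B: "B \<in> carrier_mat k k" "transpose_mat B = B" and C: "C \<in> carrier_mat k k" "transpose_mat C = C"
    and cs: "\<And>w. w \<in> carrier_vec k \<Longrightarrow> (w \<bullet> (B *\<^sub>v w))\<^sup>2 \<le> (w \<bullet> w) * (w \<bullet> (C *\<^sub>v w))"
    and nonneg: "0 \<le> sym_eig B i" and i: "1 \<le> i" "i \<le> k"
  shows "(sym_eig B i)\<^sup>2 \<le> sym_eig C i"
proof -
  obtain VB where EB: "sorted_eigen_decomp B k VB (sym_eig B)" using sym_eig_sorted_eigen_decomp[OF B] by blast
  obtain VC where EC: "sorted_eigen_decomp C k VC (sym_eig C)" using sym_eig_sorted_eigen_decomp[OF C] by blast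
  define X where "X = mat k i (\<lambda>(r, c). VB $$ (r, c))"
  have X: "X \<in> carrier_mat k i" "transpose_mat X * X = 1\<^sub>m i"
    unfolding X_def using leading_cols_orthonormal[OF sorted_eigen_decompD(2,3)[OF EB] i(2)] by auto
  note Xw = courant_fischer_witness[OF EB i, folded X_def]
  show ?thesis
  proof (rule courant_fischer_bound[OF EC i X])
    fix y :: "real vec" assume y: "y \<in> carrier_vec i"
    let ?z = "X *\<^sub>v y"
    have z: "?z \<in> carrier_vec k" using X y by simp
    show "(sym_eig B i)\<^sup>2 * (y \<bullet> y) \<le> ?z \<bullet> (C *\<^sub>v ?z)"
    proof (cases "y = 0\<^sub>v i")
      case True
      then show ?thesis using X C by (simp add: mult_mat_zero_vec)
    next
      case False
      have "(sym_eig B i * (y \<bullet> y))\<^sup>2 \<le> (?z \<bullet> (B *\<^sub>v ?z))\<^sup>2"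
        using Xw[OF y] nonneg scalar_prod_self_nonneg[of y] by (intro power_mono) simp_all
      also have "\<dots> \<le> (y \<bullet> y) * (?z \<bullet> (C *\<^sub>v ?z))"
        using cs[OF z] orthonormal_cols_scalar_prod[OF X y y] by simp
      finally show ?thesis using scalar_prod_self_pos[OF y False]
        by (simp add: power2_eq_square field_simps)
    qed
  qed
qed

section \<open>Pseudoinverse and the Nystrom approximation\<close>

definition penrose_conditions :: "real mat \<Rightarrow> real mat \<Rightarrow> bool" where
  "penrose_conditions B X \<longleftrightarrow> B * X * B = B \<and> X * B * X = X \<and>
     transpose_mat (B * X) = B * X \<and> transpose_mat (X * B) = X * B"

lemma penrose_conditions_unique:
  assumes B: "B \<in> carrier_mat k k" and X: "X \<in> carrier_mat k k" and Y: "Y \<in> carrier_mat k k"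
    and PX: "penrose_conditions B X" and PY: "penrose_conditions B Y"
  shows "X = Y"
proof -
  note simps = assoc_mult_mat[of _ k k _ k _ k] mult_carrier_mat[of _ k k _ k] transpose_mult[of _ k k _ k]
  from PX have x: "B * X * B = B" "X * B * X = X" "transpose_mat (B * X) = B * X"
    "transpose_mat (X * B) = X * B" unfolding penrose_conditions_def by auto
  from PY have y: "B * Y * B = B" "Y * B * Y = Y" "transpose_mat (B * Y) = B * Y"
    "transpose_mat (Y * B) = Y * B" unfolding penrose_conditions_def by auto
  have "X = X * (B * Y * B) * X" using x(2) y(1) by simp
  also have "\<dots> = (X * B) * (Y * B) * X" using B X Y by (simp add: simps)
  also have "\<dots> = transpose_mat (X * B) * transpose_mat (Y * B) * X" using x(4) y(4) by simp
  also have "\<dots> = transpose_mat (Y * (B * X * B)) * X" using B X Y by (simp add: simps)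
  also have "\<dots> = Y * B * X" using x(1) y(4) by simp
  finally have X1: "X = Y * B * X" .
  have "Y = Y * (B * X * B) * Y" using y(2) x(1) by simp
  also have "\<dots> = Y * (B * X) * (B * Y)" using B X Y by (simp add: simps)
  also have "\<dots> = Y * transpose_mat (B * X) * transpose_mat (B * Y)" using x(3) y(3) by simp
  also have "\<dots> = Y * transpose_mat ((B * Y * B) * X)" using B X Y by (simp add: simps)
  also have "\<dots> = Y * transpose_mat (B * X)" using y(1) by simp
  also have "\<dots> = Y * B * X" using x(3) B X Y by (simp add: simps)
  finally show ?thesis using X1 by simp
qed

lemma pinv_sym_mat:
  fixes B :: "real mat"
  assumes B: "B \<in> carrier_mat k k" and sym: "transpose_mat B = B"
  shows "pinv B \<in> carrier_mat k k" "penrose_conditions B (pinv B)" "transpose_mat (pinv B) = pinv B"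
proof -
  obtain d V where V: "V \<in> carrier_mat k k" "transpose_mat V * V = 1\<^sub>m k"
    and dec: "B = V * mat_diag k d * transpose_mat V"
    using sym_mat_spectral_decomp_sorted[OF B sym] by blast
  define d' where "d' = (\<lambda>j. if d j = 0 then 0 else 1 / d j)"
  define X where "X = V * mat_diag k d' * transpose_mat V"
  have X: "X \<in> carrier_mat k k" unfolding X_def using V by (simp add: mult_carrier_mat[of _ k k _ k])
  have conj_sym: "transpose_mat (V * mat_diag k f * transpose_mat V) = V * mat_diag k f * transpose_mat V" for f
    using transpose_conjugate_mat[OF V(1) mat_diag_dim] by (simp add: transpose_mat_diag)
  have BX: "B * X = V * mat_diag k (\<lambda>j. d j * d' j) * transpose_mat V"
    and XB: "X * B = V * mat_diag k (\<lambda>j. d' j * d j) * transpose_mat V"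
    unfolding dec X_def by (rule mat_diag_conjugate_mult[OF V])+
  have "B * X * B = V * mat_diag k (\<lambda>j. d j * d' j * d j) * transpose_mat V"
    unfolding BX by (subst dec) (rule mat_diag_conjugate_mult[OF V])
  moreover have "X * B * X = V * mat_diag k (\<lambda>j. d' j * d j * d' j) * transpose_mat V"
    unfolding XB by (subst X_def) (rule mat_diag_conjugate_mult[OF V])
  moreover have "(\<lambda>j. d j * d' j * d j) = d" "(\<lambda>j. d' j * d j * d' j) = d'" by (auto simp: d'_def)
  ultimately have "penrose_conditions B X"
    unfolding penrose_conditions_def BX XB using conj_sym by (simp add: dec X_def)
  then have "\<exists>X. X \<in> carrier_mat (dim_col B) (dim_row B) \<and> B * X * B = B \<and> X * B * X = X \<and>
      transpose_mat (B * X) = B * X \<and> transpose_mat (X * B) = X * B"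
    using X B unfolding penrose_conditions_def by auto
  from someI_ex[OF this] show P: "pinv B \<in> carrier_mat k k" "penrose_conditions B (pinv B)"
    unfolding pinv_def[symmetric] penrose_conditions_def using B by auto
  have "pinv B = X" by (rule penrose_conditions_unique[OF B P(1) X P(2) \<open>penrose_conditions B X\<close>])
  then show "transpose_mat (pinv B) = pinv B" using conj_sym unfolding X_def by simp
qed

lemma penrose_conditions_range:
  fixes B Y :: "real mat"
  assumes B: "B \<in> carrier_mat k k" "transpose_mat B = B"
    and Y: "Y \<in> carrier_mat k k" "penrose_conditions B Y" "transpose_mat Y = Y"
    and u: "u \<in> carrier_vec k" and perp: "\<And>x. x \<in> carrier_vec k \<Longrightarrow> B *\<^sub>v x = 0\<^sub>v k \<Longrightarrow> u \<bullet> x = 0"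
  shows "B *\<^sub>v (Y *\<^sub>v u) = u"
proof -
  note simps = assoc_mult_mat[of _ k k _ k _ k] mult_carrier_mat[of _ k k _ k] transpose_mult[of _ k k _ k]
  \<comment> \<open>\<open>P = B Y\<close> is the orthogonal projection onto the range of \<open>B\<close>\<close>
  define P where "P = B * Y"
  have P: "P \<in> carrier_mat k k" unfolding P_def using B Y by simp
  from Y(2) have y: "B * Y * B = B" "transpose_mat (B * Y) = B * Y"
    unfolding penrose_conditions_def by auto
  have Pt: "transpose_mat P = P" unfolding P_def by (rule y(2))
  have PYB: "P = Y * B" using Pt B Y Y(3) B(2) by (simp add: P_def transpose_mult[OF B(1) Y(1)])
  have "B * P = B * Y * B" unfolding PYB using B Y by simp
  then have BP: "B * P = B" using y(1) by simp
  have "P * P = B * Y * B * Y" unfolding P_def using B Y by (simp add: simps)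
  then have PP: "P * P = P" using y(1) unfolding P_def by simp
  define g where "g = u - P *\<^sub>v u"
  have g: "g \<in> carrier_vec k" unfolding g_def using P u by simp
  have "B *\<^sub>v g = 0\<^sub>v k"
    unfolding g_def using B P u BP by (simp add: mult_minus_distrib_mat_vec[of B k k] assoc_mult_mat_vec[symmetric, of B k k P k])
  then have "u \<bullet> g = 0" using perp g by simp
  moreover have "(P *\<^sub>v u) \<bullet> g = 0"
  proof -
    have "(P *\<^sub>v u) \<bullet> g = u \<bullet> (P *\<^sub>v g)" using transpose_vec_mult_scalar[OF P g u] Pt by simp
    also have "P *\<^sub>v g = 0\<^sub>v k"
      unfolding g_def using P u PP by (simp add: mult_minus_distrib_mat_vec[of P k k] assoc_mult_mat_vec[symmetric, of P k k P k])
    finally show ?thesis using u by simp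
  qed
  ultimately have "g \<bullet> g = 0" unfolding g_def[of] using u P g by (simp add: minus_scalar_prod_distrib[of _ k])
  then have g0: "u - P *\<^sub>v u = 0\<^sub>v k" using scalar_prod_self_eq_0[OF g] unfolding g_def by simp
  have "P *\<^sub>v u = u"
  proof (rule eq_vecI)
    fix i assume "i < dim_vec u"
    then show "(P *\<^sub>v u) $ i = u $ i" using arg_cong[OF g0, of "\<lambda>v. v $ i"] u P by simp
  qed (use P u in simp)
  then show ?thesis unfolding P_def using B Y u by simp
qed

definition nystrom :: "real mat \<Rightarrow> real mat \<Rightarrow> real mat" where
  "nystrom A F = A * F * pinv (transpose_mat F * A * F) * transpose_mat (A * F)"

lemma nystrom_carrier_sym:
  fixes A F :: "real mat"
  assumes A: "A \<in> carrier_mat n n" "transpose_mat A = A" and F: "F \<in> carrier_mat n k"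
  shows "nystrom A F \<in> carrier_mat n n" "transpose_mat (nystrom A F) = nystrom A F"
proof -
  note B = congruent_mat_sym[OF A F]
  have AF: "A * F \<in> carrier_mat n k" using A F by simp
  show "nystrom A F \<in> carrier_mat n n"
    unfolding nystrom_def using AF pinv_sym_mat(1)[OF B] by simp
  show "transpose_mat (nystrom A F) = nystrom A F"
    unfolding nystrom_def using transpose_conjugate_mat[OF AF pinv_sym_mat(1)[OF B]] pinv_sym_mat(3)[OF B]
    by simp
qed

lemma nystrom_quadratic_form:
  fixes A F :: "real mat"
  assumes A: "A \<in> carrier_mat n n" "transpose_mat A = A" and F: "F \<in> carrier_mat n k"
    and z: "z \<in> carrier_vec n"
  shows "z \<bullet> (nystrom A F *\<^sub>v z) = (transpose_mat F *\<^sub>v (A *\<^sub>v z)) \<bullet>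
      (pinv (transpose_mat F * A * F) *\<^sub>v (transpose_mat F *\<^sub>v (A *\<^sub>v z)))"
proof -
  let ?Y = "pinv (transpose_mat F * A * F)"
  have Y: "?Y \<in> carrier_mat k k" using pinv_sym_mat(1)[OF congruent_mat_sym[OF A F]] .
  have AFt: "transpose_mat (A * F) \<in> carrier_mat k n" using A F by simp
  have "transpose_mat (A * F) *\<^sub>v z = transpose_mat F *\<^sub>v (A *\<^sub>v z)"
    using A F z by (simp add: transpose_mult[OF A(1) F])
  moreover have "nystrom A F = transpose_mat (transpose_mat (A * F)) * ?Y * transpose_mat (A * F)"
    unfolding nystrom_def by simp
  ultimately show ?thesis using quadratic_form_congruent[OF AFt Y z] by simp
qed

lemma nystrom_le:
  fixes A F :: "real mat"
  assumes A: "A \<in> carrier_mat n n" "transpose_mat A = A"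
    and psd: "\<And>v. v \<in> carrier_vec n \<Longrightarrow> 0 \<le> v \<bullet> (A *\<^sub>v v)"
    and F: "F \<in> carrier_mat n k" and z: "z \<in> carrier_vec n"
  shows "z \<bullet> (nystrom A F *\<^sub>v z) \<le> z \<bullet> (A *\<^sub>v z)"
proof -
  define B where "B = transpose_mat F * A * F"
  define Y where "Y = pinv B"
  define u where "u = transpose_mat F *\<^sub>v (A *\<^sub>v z)"
  note Bc = congruent_mat_sym[OF A F, folded B_def]
  note Yc = pinv_sym_mat[OF Bc, folded Y_def]
  have u: "u \<in> carrier_vec k" unfolding u_def using A F z by simp
  have Yu: "Y *\<^sub>v u \<in> carrier_vec k" using Yc(1) u by simp
  define v where "v = F *\<^sub>v (Y *\<^sub>v u)"
  have v: "v \<in> carrier_vec n" unfolding v_def using F Yu by simp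
  \<comment> \<open>\<open>F Y u\<close> is the \<open>A\<close>-orthogonal projection of \<open>z\<close> onto the range of \<open>F\<close>\<close>
  have vAz: "v \<bullet> (A *\<^sub>v z) = u \<bullet> (Y *\<^sub>v u)"
    using transpose_vec_mult_scalar[OF F Yu, of "A *\<^sub>v z"] comm_scalar_prod[OF u Yu]
      comm_scalar_prod[of v n "A *\<^sub>v z"] A z v unfolding u_def v_def by simp
  have "v \<bullet> (A *\<^sub>v v) = u \<bullet> ((transpose_mat Y * B * Y) *\<^sub>v u)"
    unfolding v_def B_def using quadratic_form_congruent[OF F A(1) Yu]
      quadratic_form_congruent[OF Yc(1) Bc(1) u] by (simp add: B_def)
  also have "transpose_mat Y * B * Y = Y" using Yc(2,3) unfolding penrose_conditions_def by simp
  finally have vAv: "v \<bullet> (A *\<^sub>v v) = u \<bullet> (Y *\<^sub>v u)" .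
  have "0 \<le> (z - v) \<bullet> (A *\<^sub>v (z - v))" using psd z v by simp
  also have "\<dots> = z \<bullet> (A *\<^sub>v z) - u \<bullet> (Y *\<^sub>v u)"
    unfolding quadratic_form_diff[OF A z v] vAz vAv by simp
  finally show ?thesis
    using nystrom_quadratic_form[OF A F z] unfolding u_def Y_def B_def by simp
qed

lemma nystrom_ge:
  fixes A F :: "real mat"
  assumes A: "A \<in> carrier_mat n n" "transpose_mat A = A"
    and psd: "\<And>v. v \<in> carrier_vec n \<Longrightarrow> 0 \<le> v \<bullet> (A *\<^sub>v v)"
    and F: "F \<in> carrier_mat n k" and z: "z \<in> carrier_vec n" and c: "c \<in> carrier_vec k"
  shows "z \<bullet> (A *\<^sub>v z) - (z - F *\<^sub>v c) \<bullet> (A *\<^sub>v (z - F *\<^sub>v c)) \<le> z \<bullet> (nystrom A F *\<^sub>v z)"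
proof -
  define B where "B = transpose_mat F * A * F"
  define Y where "Y = pinv B"
  define u where "u = transpose_mat F *\<^sub>v (A *\<^sub>v z)"
  note Bc = congruent_mat_sym[OF A F, folded B_def]
  note Yc = pinv_sym_mat[OF Bc, folded Y_def]
  have u: "u \<in> carrier_vec k" unfolding u_def using A F z by simp
  have Yu: "Y *\<^sub>v u \<in> carrier_vec k" using Yc(1) u by simp
  have Bqf: "w \<bullet> (B *\<^sub>v w) = (F *\<^sub>v w) \<bullet> (A *\<^sub>v (F *\<^sub>v w))" if "w \<in> carrier_vec k" for w
    unfolding B_def by (rule quadratic_form_congruent[OF F A(1) that])
  have Fu: "(F *\<^sub>v w) \<bullet> (A *\<^sub>v z) = w \<bullet> u" if "w \<in> carrier_vec k" for w
    using transpose_vec_mult_scalar[OF F that, of "A *\<^sub>v z"] comm_scalar_prod[OF that u]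
      comm_scalar_prod[of "F *\<^sub>v w" n "A *\<^sub>v z"] A z F that unfolding u_def by simp
  \<comment> \<open>\<open>u\<close> is orthogonal to the kernel of \<open>B\<close>, hence lies in its range\<close>
  have "u \<bullet> x = 0" if x: "x \<in> carrier_vec k" and Bx: "B *\<^sub>v x = 0\<^sub>v k" for x
  proof -
    have Fx: "F *\<^sub>v x \<in> carrier_vec n" using F x by simp
    have "A *\<^sub>v (F *\<^sub>v x) = 0\<^sub>v n"
      using psd_quadratic_form_zero_imp_zero[OF A _ Fx] Bqf[OF x] Bx psd x by simp
    then show ?thesis
      using Fu[OF x] sym_mat_scalar_prod_swap[OF A Fx z] comm_scalar_prod[OF u x] z by simp
  qed
  then have BYu: "B *\<^sub>v (Y *\<^sub>v u) = u" by (intro penrose_conditions_range[OF Bc Yc u])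
  have "0 \<le> (c - Y *\<^sub>v u) \<bullet> (B *\<^sub>v (c - Y *\<^sub>v u))" using Bqf[of "c - Y *\<^sub>v u"] psd F c Yu by simp
  also have "\<dots> = c \<bullet> (B *\<^sub>v c) - 2 * (c \<bullet> u) + u \<bullet> (Y *\<^sub>v u)"
    unfolding quadratic_form_diff[OF Bc c Yu] BYu
    using sym_mat_scalar_prod_swap[OF Bc Yu c] BYu comm_scalar_prod[OF Yu u] by simp
  finally have "2 * (c \<bullet> u) - c \<bullet> (B *\<^sub>v c) \<le> u \<bullet> (Y *\<^sub>v u)" by simp
  moreover have "z \<bullet> (A *\<^sub>v z) - (z - F *\<^sub>v c) \<bullet> (A *\<^sub>v (z - F *\<^sub>v c)) = 2 * (c \<bullet> u) - c \<bullet> (B *\<^sub>v c)"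
    using quadratic_form_diff[OF A z, of "F *\<^sub>v c"] F c Fu[OF c] Bqf[OF c] by simp
  ultimately show ?thesis
    using nystrom_quadratic_form[OF A F z] unfolding u_def Y_def B_def by simp
qed

section \<open>Eigenvalue estimates\<close>

lemma sing_val_le_eig:
  assumes E: "sorted_eigen_decomp A n U lam" and sym: "transpose_mat A = A"
    and nonneg: "\<And>j. 1 \<le> j \<Longrightarrow> j \<le> n \<Longrightarrow> 0 \<le> lam j"
    and Q: "Q \<in> carrier_mat n k" "transpose_mat Q * Q = 1\<^sub>m k" and i: "1 \<le> i" "i \<le> k" and kn: "k \<le> n"
  shows "sing_val (A * Q) i \<le> lam i"
proof -
  note A = sorted_eigen_decompD(1)[OF E]
  have AQ: "A * Q \<in> carrier_mat n k" using A Q by simp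
  have C: "transpose_mat (A * Q) * (A * Q) \<in> carrier_mat k k"
    "transpose_mat (transpose_mat (A * Q) * (A * Q)) = transpose_mat (A * Q) * (A * Q)"
    using congruent_mat_sym[OF one_carrier_mat _ AQ] AQ by auto
  have qf: "w \<bullet> ((transpose_mat (A * Q) * (A * Q)) *\<^sub>v w) = (Q *\<^sub>v w) \<bullet> ((A * A) *\<^sub>v (Q *\<^sub>v w))"
    if w: "w \<in> carrier_vec k" for w
  proof -
    have Qw: "Q *\<^sub>v w \<in> carrier_vec n" using Q w by simp
    have "w \<bullet> ((transpose_mat (A * Q) * (A * Q)) *\<^sub>v w) = (A *\<^sub>v (Q *\<^sub>v w)) \<bullet> (A *\<^sub>v (Q *\<^sub>v w))"
      using quadratic_form_congruent[OF AQ one_carrier_mat w] A Q w by simp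
    also have "\<dots> = (Q *\<^sub>v w) \<bullet> ((A * A) *\<^sub>v (Q *\<^sub>v w))"
      using sym_mat_scalar_prod_swap[OF A sym Qw, of "A *\<^sub>v (Q *\<^sub>v w)"] A Qw by simp
    finally show ?thesis .
  qed
  have "sym_eig (transpose_mat (A * Q) * (A * Q)) i \<le> (lam i)\<^sup>2"
    by (rule sym_eig_le_compression[OF sorted_eigen_decomp_sq[OF E nonneg] C Q eq_refl[OF qf] i kn])
  then show ?thesis
    unfolding sing_val_def using real_sqrt_le_mono nonneg[of i] i kn by fastforce
qed

lemma rayleigh_ritz_eig_le_sing_val:
  fixes A Q :: "real mat"
  assumes A: "A \<in> carrier_mat n n" "transpose_mat A = A"
    and psd: "\<And>v. v \<in> carrier_vec n \<Longrightarrow> 0 \<le> v \<bullet> (A *\<^sub>v v)"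
    and Q: "Q \<in> carrier_mat n k" "transpose_mat Q * Q = 1\<^sub>m k" and i: "1 \<le> i" "i \<le> k"
  shows "sym_eig (transpose_mat Q * A * Q) i \<le> sing_val (A * Q) i"
proof -
  have AQ: "A * Q \<in> carrier_mat n k" using A Q by simp
  note B = congruent_mat_sym[OF A Q(1)]
  have C: "transpose_mat (A * Q) * (A * Q) \<in> carrier_mat k k"
    "transpose_mat (transpose_mat (A * Q) * (A * Q)) = transpose_mat (A * Q) * (A * Q)"
    using congruent_mat_sym[OF one_carrier_mat _ AQ] AQ by auto
  have nonneg: "0 \<le> sym_eig (transpose_mat Q * A * Q) i"
    using sym_eig_nonneg[OF B _ i] quadratic_form_congruent[OF Q(1) A(1)] psd Q(1) by simp
  have "(w \<bullet> ((transpose_mat Q * A * Q) *\<^sub>v w))\<^sup>2 \<le> (w \<bullet> w) * (w \<bullet> ((transpose_mat (A * Q) * (A * Q)) *\<^sub>v w))"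
    if w: "w \<in> carrier_vec k" for w
  proof -
    have Qw: "Q *\<^sub>v w \<in> carrier_vec n" using Q w by simp
    have "((Q *\<^sub>v w) \<bullet> (A *\<^sub>v (Q *\<^sub>v w)))\<^sup>2 \<le> ((Q *\<^sub>v w) \<bullet> (Q *\<^sub>v w)) * ((A *\<^sub>v (Q *\<^sub>v w)) \<bullet> (A *\<^sub>v (Q *\<^sub>v w)))"
      using scalar_prod_Cauchy_Schwarz[OF Qw] A Qw by simp
    then show ?thesis
      using quadratic_form_congruent[OF Q(1) A(1) w] quadratic_form_congruent[OF AQ one_carrier_mat w]
        orthonormal_cols_scalar_prod[OF Q w w] A Q w by simp
  qed
  then have "(sym_eig (transpose_mat Q * A * Q) i)\<^sup>2 \<le> sym_eig (transpose_mat (A * Q) * (A * Q)) i"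
    by (intro sym_eig_sq_le[OF B C _ nonneg i])
  then show ?thesis unfolding sing_val_def using nonneg by (simp add: real_le_rsqrt)
qed

lemma nystrom_eig_le:
  assumes E: "sorted_eigen_decomp A n U lam" and sym: "transpose_mat A = A"
    and psd: "\<And>v. v \<in> carrier_vec n \<Longrightarrow> 0 \<le> v \<bullet> (A *\<^sub>v v)"
    and F: "F \<in> carrier_mat n k" and i: "1 \<le> i" "i \<le> n"
  shows "sym_eig (nystrom A F) i \<le> lam i"
proof -
  note A = sorted_eigen_decompD(1)[OF E] sym
  show ?thesis
    by (rule sym_eig_le_compression[OF E nystrom_carrier_sym[OF A F] one_carrier_mat _ _ i order.refl])
      (use nystrom_le[OF A psd F] in simp_all)
qed

locale perturbed_eigenbasis =
  fixes A U :: "real mat" and lam :: "nat \<Rightarrow> real" and n k :: nat and \<epsilon> :: real and M N :: "real mat"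
  assumes decomp: "sorted_eigen_decomp A n U lam"
    and lam_nonneg: "\<And>j. 1 \<le> j \<Longrightarrow> j \<le> n \<Longrightarrow> 0 \<le> lam j"
    and k_less: "k < n" and eps: "0 \<le> \<epsilon>" "\<epsilon> < 1"
    and M: "M \<in> carrier_mat k k" "spec_norm M \<le> 1"
    and N: "N \<in> carrier_mat (n - k) k" "spec_norm N \<le> 1"
begin

definition coeffs :: "real mat" where
  "coeffs = mat n k (\<lambda>(r, c). if r < k then (if r = c then 1 else 0) + \<epsilon>\<^sup>2 * M $$ (r, c)
                             else \<epsilon> * N $$ (r - k, c))"

definition basis :: "real mat" where
  "basis = U * coeffs"

lemma U_carrier: "U \<in> carrier_mat n n"
  using sorted_eigen_decompD(2)[OF decomp] .

lemma A_carrier: "A \<in> carrier_mat n n"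
  using sorted_eigen_decompD(1)[OF decomp] .

lemma A_sym: "transpose_mat A = A"
  using sorted_eigen_decompD(5)[OF decomp] transpose_conjugate_mat[OF U_carrier mat_diag_dim]
  by (simp add: transpose_mat_diag)

lemma coeffs_carrier: "coeffs \<in> carrier_mat n k"
  unfolding coeffs_def by simp

lemma basis_carrier: "basis \<in> carrier_mat n k"
  unfolding basis_def using U_carrier coeffs_carrier by simp

lemma basis_mult_vec: "c \<in> carrier_vec k \<Longrightarrow> basis *\<^sub>v c = U *\<^sub>v (coeffs *\<^sub>v c)"
  unfolding basis_def using U_carrier coeffs_carrier by simp

lemma basis_eq:
  "basis = mat n k (\<lambda>(r, c). U $$ (r, c)) + \<epsilon>\<^sup>2 \<cdot>\<^sub>m (mat n k (\<lambda>(r, c). U $$ (r, c)) * M)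
    + \<epsilon> \<cdot>\<^sub>m (mat n (n - k) (\<lambda>(r, c). U $$ (r, c + k)) * N)" (is "_ = ?Q")
proof (rule eq_matI)
  fix r c assume "r < dim_row ?Q" "c < dim_col ?Q"
  then have r: "r < n" and c: "c < k" using N(1) by auto
  have "basis $$ (r, c) = (\<Sum>l\<in>{0..<n}. U $$ (r, l) * coeffs $$ (l, c))"
    unfolding basis_def by (rule index_mult_mat_sum[OF U_carrier coeffs_carrier r c])
  also have "\<dots> = (\<Sum>l\<in>{0..<k}. U $$ (r, l) * coeffs $$ (l, c)) + (\<Sum>l\<in>{k..<n}. U $$ (r, l) * coeffs $$ (l, c))"
    using k_less by (simp add: sum.atLeastLessThan_concat)
  also have "(\<Sum>l\<in>{0..<k}. U $$ (r, l) * coeffs $$ (l, c))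
      = (\<Sum>l\<in>{0..<k}. (if l = c then U $$ (r, c) else 0) + \<epsilon>\<^sup>2 * (U $$ (r, l) * M $$ (l, c)))"
    using c k_less by (intro sum.cong) (auto simp: coeffs_def algebra_simps)
  also have "\<dots> = U $$ (r, c) + \<epsilon>\<^sup>2 * (\<Sum>l\<in>{0..<k}. U $$ (r, l) * M $$ (l, c))"
    using c by (simp add: sum.distrib sum_distrib_left)
  also have "(\<Sum>l\<in>{k..<n}. U $$ (r, l) * coeffs $$ (l, c)) = \<epsilon> * (\<Sum>l\<in>{0..<n - k}. U $$ (r, l + k) * N $$ (l, c))"
    using c by (simp add: sum.atLeastLessThan_shift_0[of _ k n] coeffs_def sum_distrib_left algebra_simps)
  finally show "basis $$ (r, c) = ?Q $$ (r, c)"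
    using r c M(1) N(1) by (simp add: scalar_prod_def)
qed (use basis_carrier N(1) in auto)

lemma eps_sq: "0 \<le> \<epsilon>\<^sup>2" "\<epsilon>\<^sup>2 < 1"
  using eps by (simp_all add: power_less_one_iff abs_less_iff)

lemma coeffs_mult_vec_head:
  assumes c: "c \<in> carrier_vec k" and r: "r < k"
  shows "(coeffs *\<^sub>v c) $ r = (c + \<epsilon>\<^sup>2 \<cdot>\<^sub>v (M *\<^sub>v c)) $ r"
proof -
  have "(\<Sum>l\<in>{0..<k}. c $ l * (if r = l then 1 else 0)) = (\<Sum>l\<in>{0..<k}. if l = r then c $ r else 0)"
    by (rule sum.cong) auto
  then have delta: "(\<Sum>l\<in>{0..<k}. c $ l * (if r = l then 1 else 0)) = c $ r" using r by simp
  have "(coeffs *\<^sub>v c) $ r = (\<Sum>l\<in>{0..<k}. ((if r = l then 1 else 0) + \<epsilon>\<^sup>2 * M $$ (r, l)) * c $ l)"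
    using c r k_less by (simp add: coeffs_def scalar_prod_def)
  also have "\<dots> = c $ r + \<epsilon>\<^sup>2 * (\<Sum>l\<in>{0..<k}. M $$ (r, l) * c $ l)"
    using delta by (simp add: sum.distrib sum_distrib_left algebra_simps)
  also have "\<dots> = (c + \<epsilon>\<^sup>2 \<cdot>\<^sub>v (M *\<^sub>v c)) $ r"
    using c r M(1) by (simp add: scalar_prod_def)
  finally show ?thesis .
qed

lemma coeffs_mult_vec_tail:
  assumes c: "c \<in> carrier_vec k" and l: "l < n - k"
  shows "(coeffs *\<^sub>v c) $ (k + l) = \<epsilon> * (N *\<^sub>v c) $ l"
  using c l N(1) by (simp add: coeffs_def scalar_prod_def sum_distrib_left mult.assoc)

lemma head_sq_norm_ge:
  assumes c: "c \<in> carrier_vec k"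
  shows "(1 - \<epsilon>\<^sup>2)\<^sup>2 * (c \<bullet> c) \<le> (c + \<epsilon>\<^sup>2 \<cdot>\<^sub>v (M *\<^sub>v c)) \<bullet> (c + \<epsilon>\<^sup>2 \<cdot>\<^sub>v (M *\<^sub>v c))"
  using sq_norm_add_smult_ge[OF c _ spec_norm_le_1_imp_sq_norm_le[OF M c]] M(1) c eps_sq by simp

lemma rayleigh_ritz_eig_ge:
  assumes i: "1 \<le> i" "i \<le> k"
  shows "lam i * (1 - \<epsilon>\<^sup>2)\<^sup>2 \<le> sym_eig (transpose_mat basis * A * basis) i"
proof -
  let ?B = "transpose_mat basis * A * basis"
  note B = congruent_mat_sym[OF A_carrier A_sym basis_carrier]
  obtain V where EB: "sorted_eigen_decomp ?B k V (sym_eig ?B)"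
    using sym_eig_sorted_eigen_decomp[OF B] by blast
  define X where "X = mat k i (\<lambda>(r, c). (1\<^sub>m k :: real mat) $$ (r, c))"
  have X: "X \<in> carrier_mat k i" "transpose_mat X * X = 1\<^sub>m i"
    unfolding X_def using leading_cols_orthonormal[of "1\<^sub>m k :: real mat" k i] i(2)
      left_mult_one_mat[of "1\<^sub>m k :: real mat" k k] by auto
  show ?thesis
  proof (rule courant_fischer_bound[OF EB i X])
    fix y :: "real vec" assume y: "y \<in> carrier_vec i"
    define c where "c = vec k (\<lambda>r. if r < i then y $ r else 0)"
    have c: "c \<in> carrier_vec k" unfolding c_def by simp
    have Xy: "X *\<^sub>v y = c" unfolding X_def c_def using leading_cols_mult_vec[OF one_carrier_mat y i(2)] by simp
    define w where "w = coeffs *\<^sub>v c"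
    have w: "w \<in> carrier_vec n" unfolding w_def using coeffs_carrier c by simp
    have cc: "c \<bullet> c = y \<bullet> y"
      using i y by (simp add: c_def scalar_prod_self_sum_squares, intro sum.mono_neutral_cong_right) auto
    \<comment> \<open>on the first \<open>i\<close> coordinates, \<open>w = y + \<epsilon>\<^sup>2 m\<close> with \<open>\<parallel>m\<parallel> \<le> \<parallel>y\<parallel>\<close>\<close>
    define m where "m = vec i (\<lambda>r. (M *\<^sub>v c) $ r)"
    have "m \<bullet> m \<le> (M *\<^sub>v c) \<bullet> (M *\<^sub>v c)"
      using i M(1) by (simp add: m_def scalar_prod_self_sum_squares, intro sum_mono2) auto
    also have "\<dots> \<le> y \<bullet> y" using spec_norm_le_1_imp_sq_norm_le[OF M c] cc by simp
    finally have "(1 - \<epsilon>\<^sup>2)\<^sup>2 * (y \<bullet> y) \<le> (y + \<epsilon>\<^sup>2 \<cdot>\<^sub>v m) \<bullet> (y + \<epsilon>\<^sup>2 \<cdot>\<^sub>v m)"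
      using sq_norm_add_smult_ge[OF y _ _ eps_sq(1)] eps_sq(2) by (simp add: m_def)
    also have "\<dots> = (\<Sum>r\<in>{0..<i}. (w $ r)\<^sup>2)"
      using y i coeffs_mult_vec_head[OF c] M(1) c
      by (simp add: scalar_prod_self_sum_squares w_def m_def c_def)
    finally have "lam i * ((1 - \<epsilon>\<^sup>2)\<^sup>2 * (y \<bullet> y)) \<le> (U *\<^sub>v w) \<bullet> (A *\<^sub>v (U *\<^sub>v w))"
      using sorted_eigen_decomp_head_ge[OF decomp lam_nonneg w, of i] lam_nonneg[of i] i k_less
      by (meson le_less_trans less_imp_le_nat mult_left_mono order_trans)
    also have "(U *\<^sub>v w) \<bullet> (A *\<^sub>v (U *\<^sub>v w)) = (X *\<^sub>v y) \<bullet> (?B *\<^sub>v (X *\<^sub>v y))"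
      unfolding Xy quadratic_form_congruent[OF basis_carrier A_carrier c] basis_mult_vec[OF c] w_def ..
    finally show "lam i * (1 - \<epsilon>\<^sup>2)\<^sup>2 * (y \<bullet> y) \<le> (X *\<^sub>v y) \<bullet> (?B *\<^sub>v (X *\<^sub>v y))"
      by (simp add: mult.assoc)
  qed
qed

lemma head_solvable:
  assumes y: "y \<in> carrier_vec k"
  obtains c where "c \<in> carrier_vec k" "c + \<epsilon>\<^sup>2 \<cdot>\<^sub>v (M *\<^sub>v c) = y" "(1 - \<epsilon>\<^sup>2)\<^sup>2 * (c \<bullet> c) \<le> y \<bullet> y"
proof -
  define G where "G = 1\<^sub>m k + \<epsilon>\<^sup>2 \<cdot>\<^sub>m M"
  have G: "G \<in> carrier_mat k k" unfolding G_def using M(1) by simp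
  have Gc: "G *\<^sub>v c = c + \<epsilon>\<^sup>2 \<cdot>\<^sub>v (M *\<^sub>v c)" if "c \<in> carrier_vec k" for c
    unfolding G_def using that M(1)
    by (intro eq_vecI) (auto simp: add_mult_distrib_mat_vec[of _ k k] scalar_prod_def sum_distrib_left mult.assoc)
  have pos: "0 < (1 - \<epsilon>\<^sup>2)\<^sup>2" using eps_sq by simp
  have "c = 0\<^sub>v k" if c: "c \<in> carrier_vec k" and Gc0: "G *\<^sub>v c = 0\<^sub>v k" for c
  proof -
    have "c + \<epsilon>\<^sup>2 \<cdot>\<^sub>v (M *\<^sub>v c) = 0\<^sub>v k" using Gc[OF c] Gc0 by simp
    then have "(1 - \<epsilon>\<^sup>2)\<^sup>2 * (c \<bullet> c) \<le> 0" using head_sq_norm_ge[OF c] by simp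
    then have "c \<bullet> c = 0" using pos scalar_prod_self_nonneg[of c] by (simp add: mult_le_0_iff)
    then show ?thesis by (rule scalar_prod_self_eq_0[OF c])
  qed
  then obtain c where c: "c \<in> carrier_vec k" "G *\<^sub>v c = y" using mat_mult_vec_solvable[OF G _ y] by blast
  then show ?thesis using that head_sq_norm_ge[OF c(1)] Gc[OF c(1)] by simp
qed

lemma nystrom_residual_le:
  assumes i: "1 \<le> i" "i \<le> k" and y: "y \<in> carrier_vec i"
  obtains c where "c \<in> carrier_vec k"
    "(mat n i (\<lambda>(r, c). U $$ (r, c)) *\<^sub>v y - basis *\<^sub>v c) \<bullet> (A *\<^sub>v (mat n i (\<lambda>(r, c). U $$ (r, c)) *\<^sub>v y - basis *\<^sub>v c))
      \<le> \<epsilon>\<^sup>2 * lam (k + 1) / (1 - \<epsilon>\<^sup>2)\<^sup>2 * (y \<bullet> y)"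
proof -
  have in_: "i \<le> n" using i k_less by simp
  define yk where "yk = vec k (\<lambda>r. if r < i then y $ r else 0)"
  define yn where "yn = vec n (\<lambda>r. if r < i then y $ r else 0)"
  have yk: "yk \<in> carrier_vec k" and yn: "yn \<in> carrier_vec n" unfolding yk_def yn_def by simp_all
  have "yk \<bullet> yk = y \<bullet> y"
    using i y by (simp add: yk_def scalar_prod_self_sum_squares, intro sum.mono_neutral_cong_right) auto
  \<comment> \<open>choose \<open>c\<close> so that \<open>Q c\<close> matches \<open>U\<^sub>1 y\<close> on the leading \<open>k\<close> eigenvectors\<close>
  obtain c where c: "c \<in> carrier_vec k" "c + \<epsilon>\<^sup>2 \<cdot>\<^sub>v (M *\<^sub>v c) = yk" and cc: "(1 - \<epsilon>\<^sup>2)\<^sup>2 * (c \<bullet> c) \<le> y \<bullet> y"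
    using head_solvable[OF yk] \<open>yk \<bullet> yk = y \<bullet> y\<close> by metis
  define w where "w = yn - coeffs *\<^sub>v c"
  have w: "w \<in> carrier_vec n" unfolding w_def using yn coeffs_carrier c by simp
  have res: "mat n i (\<lambda>(r, c). U $$ (r, c)) *\<^sub>v y - basis *\<^sub>v c = U *\<^sub>v w"
    unfolding w_def basis_mult_vec[OF c(1)] leading_cols_mult_vec[OF U_carrier y in_] yn_def[symmetric]
    using mult_minus_distrib_mat_vec[OF U_carrier yn, of "coeffs *\<^sub>v c"] coeffs_carrier c(1) by simp
  have "w $ r = 0" if "r < k" for r
    using arg_cong[OF c(2), of "\<lambda>v. v $ r"] coeffs_mult_vec_head[OF c(1) that] that k_less c(1) M(1)
      coeffs_carrier unfolding w_def yn_def yk_def by simp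
  then have tail: "(U *\<^sub>v w) \<bullet> (A *\<^sub>v (U *\<^sub>v w)) \<le> lam (k + 1) * (\<Sum>l\<in>{0..<n - k}. (w $ (k + l))\<^sup>2)"
    by (rule sorted_eigen_decomp_tail_le[OF decomp w])
  have "(\<Sum>l\<in>{0..<n - k}. (w $ (k + l))\<^sup>2) = \<epsilon>\<^sup>2 * ((N *\<^sub>v c) \<bullet> (N *\<^sub>v c))"
    using coeffs_mult_vec_tail[OF c(1)] i coeffs_carrier c N(1)
    by (simp add: w_def yn_def scalar_prod_self_sum_squares sum_distrib_left power_mult_distrib)
  also have "\<dots> \<le> \<epsilon>\<^sup>2 * (c \<bullet> c)"
    using spec_norm_le_1_imp_sq_norm_le[OF N c(1)] eps_sq by (simp add: mult_left_mono)
  also have "\<dots> \<le> \<epsilon>\<^sup>2 * ((y \<bullet> y) / (1 - \<epsilon>\<^sup>2)\<^sup>2)"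
    using cc eps_sq by (intro mult_left_mono) (simp_all add: le_divide_eq mult.commute)
  finally have "lam (k + 1) * (\<Sum>l\<in>{0..<n - k}. (w $ (k + l))\<^sup>2) \<le> lam (k + 1) * (\<epsilon>\<^sup>2 * ((y \<bullet> y) / (1 - \<epsilon>\<^sup>2)\<^sup>2))"
    using lam_nonneg[of "k + 1"] k_less by (intro mult_left_mono) simp_all
  moreover have "lam (k + 1) * (\<epsilon>\<^sup>2 * ((y \<bullet> y) / (1 - \<epsilon>\<^sup>2)\<^sup>2)) = \<epsilon>\<^sup>2 * lam (k + 1) / (1 - \<epsilon>\<^sup>2)\<^sup>2 * (y \<bullet> y)"
    by (simp add: divide_inverse mult_ac)
  ultimately have "(U *\<^sub>v w) \<bullet> (A *\<^sub>v (U *\<^sub>v w)) \<le> \<epsilon>\<^sup>2 * lam (k + 1) / (1 - \<epsilon>\<^sup>2)\<^sup>2 * (y \<bullet> y)"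
    using tail by linarith
  then show ?thesis using that[OF c(1)] unfolding res by blast
qed

lemma nystrom_eig_ge:
  assumes psd: "\<And>v. v \<in> carrier_vec n \<Longrightarrow> 0 \<le> v \<bullet> (A *\<^sub>v v)" and i: "1 \<le> i" "i \<le> k"
  shows "lam i - \<epsilon>\<^sup>2 * lam (k + 1) / (1 - \<epsilon>\<^sup>2)\<^sup>2 \<le> sym_eig (nystrom A basis) i"
proof -
  note Nys = nystrom_carrier_sym[OF A_carrier A_sym basis_carrier]
  obtain V where EN: "sorted_eigen_decomp (nystrom A basis) n V (sym_eig (nystrom A basis))"
    using sym_eig_sorted_eigen_decomp[OF Nys] by blast
  define X where "X = mat n i (\<lambda>(r, c). U $$ (r, c))"
  have in_: "i \<le> n" using i k_less by simp
  have X: "X \<in> carrier_mat n i" "transpose_mat X * X = 1\<^sub>m i"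
    unfolding X_def using leading_cols_orthonormal[OF sorted_eigen_decompD(2,3)[OF decomp] in_] by auto
  show ?thesis
  proof (rule courant_fischer_bound[OF EN i(1) in_ X])
    fix y :: "real vec" assume y: "y \<in> carrier_vec i"
    obtain c where c: "c \<in> carrier_vec k" and res: "(X *\<^sub>v y - basis *\<^sub>v c) \<bullet> (A *\<^sub>v (X *\<^sub>v y - basis *\<^sub>v c))
        \<le> \<epsilon>\<^sup>2 * lam (k + 1) / (1 - \<epsilon>\<^sup>2)\<^sup>2 * (y \<bullet> y)"
      using nystrom_residual_le[OF i y] unfolding X_def by blast
    have Xy: "X *\<^sub>v y \<in> carrier_vec n" using X y by simp
    have "lam i * (y \<bullet> y) \<le> (X *\<^sub>v y) \<bullet> (A *\<^sub>v (X *\<^sub>v y))"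
      unfolding X_def by (rule courant_fischer_witness[OF decomp i(1) in_ y])
    then show "(lam i - \<epsilon>\<^sup>2 * lam (k + 1) / (1 - \<epsilon>\<^sup>2)\<^sup>2) * (y \<bullet> y) \<le> (X *\<^sub>v y) \<bullet> (nystrom A basis *\<^sub>v (X *\<^sub>v y))"
      using nystrom_ge[OF A_carrier A_sym psd basis_carrier Xy c] res by (simp add: algebra_simps)
  qed
qed

end

lemma rayleigh_ritz_error_bound:
  fixes e l1 lk li \<mu> :: real
  assumes e: "0 \<le> e" "e < 1" and l1: "0 < l1" and lk: "0 \<le> lk" "lk \<le> l1" and li: "0 \<le> li" "li \<le> l1"
    and \<mu>: "li * (1 - e\<^sup>2)\<^sup>2 \<le> \<mu>" "\<mu> \<le> li"
  shows "2 + e\<^sup>2 + lk / l1 \<le> 4" and "\<bar>li - \<mu>\<bar> \<le> (2 + e\<^sup>2 + lk / l1) * e\<^sup>2 * l1"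
proof -
  have e1: "e\<^sup>2 \<le> 1" using e by (simp add: power_le_one)
  then have e2: "e\<^sup>2 * e\<^sup>2 \<le> 1 * e\<^sup>2" by (intro mult_right_mono) simp_all
  have "lk / l1 \<le> 1" using lk l1 by simp
  then show "2 + e\<^sup>2 + lk / l1 \<le> 4" using e1 by linarith
  have "\<bar>li - \<mu>\<bar> \<le> li * (2 * e\<^sup>2 - e\<^sup>2 * e\<^sup>2)"
    using \<mu> by (simp add: power2_eq_square algebra_simps)
  also have "\<dots> \<le> l1 * (2 * e\<^sup>2)"
  proof (rule mult_mono)
    show "0 \<le> 2 * e\<^sup>2 - e\<^sup>2 * e\<^sup>2" using e2 zero_le_power2[of e] by linarith
  qed (use li in simp_all)
  also have "\<dots> \<le> (2 + e\<^sup>2 + lk / l1) * e\<^sup>2 * l1"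
    using l1 lk by (simp add: algebra_simps)
  finally show "\<bar>li - \<mu>\<bar> \<le> (2 + e\<^sup>2 + lk / l1) * e\<^sup>2 * l1" .
qed

lemma nystrom_constant_ge:
  fixes e l1 lk li :: real
  assumes e: "0 \<le> e" "e < 1" and lk: "0 \<le> lk" "lk \<le> l1" and li: "0 < li" "li \<le> l1"
    and alpha: "0 < 1 - (3 * lk + 3 * e\<^sup>2 * (l1 - lk)) / li"
  shows "1 / (1 - e\<^sup>2)\<^sup>2 \<le> ((l1 * (1 + e\<^sup>2) + lk * (1 + e\<^sup>2 / (1 + sqrt (1 - e\<^sup>2))))
    / ((1 - (3 * lk + 3 * e\<^sup>2 * (l1 - lk)) / li) * li))\<^sup>2"
proof -
  define e2 where "e2 = e\<^sup>2"
  have e2: "0 \<le> e2" "e2 < 1" unfolding e2_def using e by (simp_all add: power_less_one_iff)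
  define a where "a = (1 - (3 * lk + 3 * e2 * (l1 - lk)) / li) * li"
  define b where "b = l1 * (1 + e2) + lk * (1 + e2 / (1 + sqrt (1 - e2)))"
  have a: "a = li - 3 * lk - 3 * e2 * (l1 - lk)" unfolding a_def using li by (simp add: field_simps)
  have a0: "0 < a" unfolding a_def using alpha li e2_def by simp
  \<comment> \<open>\<open>\<alpha> \<lambda>\<^sub>i \<le> \<lambda>\<^sub>1 (1 - e\<^sup>4) \<le> b (1 - e\<^sup>2)\<close>\<close>
  have "e2 * lk \<le> lk" using mult_right_mono[of e2 1 lk] e2 lk by simp
  moreover have "l1 * (e2 * e2) \<le> l1 * (3 * e2)"
    using mult_right_mono[of e2 3 e2] e2 lk by (intro mult_left_mono) simp_all
  moreover have "l1 * (1 + e2) * (1 - e2) = l1 - l1 * (e2 * e2)" by (simp add: algebra_simps)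
  ultimately have "a \<le> l1 * (1 + e2) * (1 - e2)" using a li by (simp add: algebra_simps)
  also have "\<dots> \<le> b * (1 - e2)"
    using lk e2 by (intro mult_right_mono) (simp_all add: b_def)
  finally have "1 / (1 - e2) \<le> b / a" using e2 a0 by (simp add: field_simps)
  then have "(1 / (1 - e2))\<^sup>2 \<le> (b / a)\<^sup>2" using e2 by (intro power_mono) simp_all
  then show ?thesis unfolding a_def b_def e2_def by (simp add: power_one_over)
qed

lemma nystrom_error_bound:
  fixes e l1 lk li \<omega> :: real
  assumes e: "0 \<le> e" "e < 1" and lk: "0 \<le> lk" "lk \<le> l1" and li: "0 < li" "li \<le> l1"
    and alpha: "0 < 1 - (3 * lk + 3 * e\<^sup>2 * (l1 - lk)) / li"
    and \<omega>: "li - e\<^sup>2 * lk / (1 - e\<^sup>2)\<^sup>2 \<le> \<omega>" "\<omega> \<le> li"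
  shows "\<bar>li - \<omega>\<bar> \<le> ((l1 * (1 + e\<^sup>2) + lk * (1 + e\<^sup>2 / (1 + sqrt (1 - e\<^sup>2))))
      / ((1 - (3 * lk + 3 * e\<^sup>2 * (l1 - lk)) / li) * li))\<^sup>2 * (e\<^sup>2 * lk + e ^ 4 * (l1 - lk))"
    (is "_ \<le> ?C * _")
proof -
  have "\<bar>li - \<omega>\<bar> \<le> 1 / (1 - e\<^sup>2)\<^sup>2 * (e\<^sup>2 * lk)" using \<omega> by simp
  also have "\<dots> \<le> ?C * (e\<^sup>2 * lk)"
    using nystrom_constant_ge[OF e lk li alpha] lk by (intro mult_right_mono) simp_all
  also have "\<dots> \<le> ?C * (e\<^sup>2 * lk + e ^ 4 * (l1 - lk))"
    using lk by (intro mult_left_mono) simp_all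
  finally show ?thesis .
qed

theorem theorem3p2:
  fixes n k :: nat and A U M N Q :: "real mat" and lam :: "nat \<Rightarrow> real"
    and \<epsilon> :: real and i :: nat
  assumes A_carrier: "A \<in> carrier_mat n n"
    and A_sym: "transpose_mat A = A"
    and A_psd: "\<forall>v \<in> carrier_vec n. v \<bullet> (A *\<^sub>v v) \<ge> 0"
    and U_carrier: "U \<in> carrier_mat n n"
    and U_orth: "transpose_mat U * U = 1\<^sub>m n"
    and A_eig: "A = U * mat_diag n (\<lambda>j. lam (j + 1)) * transpose_mat U"
    and lam_sorted: "\<forall>a b. 1 \<le> a \<longrightarrow> a \<le> b \<longrightarrow> b \<le> n \<longrightarrow> lam b \<le> lam a"
    and lam_nonneg: "lam n \<ge> 0"
    and lam1_pos: "lam 1 > 0"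
    and k_ge: "1 \<le> k" and k_lt: "k < n"
    and eps_ge: "0 \<le> \<epsilon>" and eps_lt: "\<epsilon> < 1"
    and M_carrier: "M \<in> carrier_mat k k"
    and N_carrier: "N \<in> carrier_mat (n - k) k"
    and M_norm: "spec_norm M \<le> 1"
    and N_norm: "spec_norm N \<le> 1"
    and Q_carrier: "Q \<in> carrier_mat n k"
    and Q_orth: "transpose_mat Q * Q = 1\<^sub>m k"
    and Q_eq: "Q = mat n k (\<lambda>(r, c). U $$ (r, c))
               + (\<epsilon>\<^sup>2 \<cdot>\<^sub>m (mat n k (\<lambda>(r, c). U $$ (r, c)) * M))
               + (\<epsilon> \<cdot>\<^sub>m (mat n (n - k) (\<lambda>(r, c). U $$ (r, c + k)) * N))"
    and i_range: "1 \<le> i" "i \<le> k"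
    and lam_i_pos: "lam i > 0"
    and alpha_pos: "1 - (3 * lam (k + 1) + 3 * \<epsilon>\<^sup>2 * (lam 1 - lam (k + 1))) / lam i > 0"
  shows
    "let \<alpha> = 1 - (3 * lam (k + 1) + 3 * \<epsilon>\<^sup>2 * (lam 1 - lam (k + 1))) / lam i;
         C_RR = 2 + \<epsilon>\<^sup>2 + lam (k + 1) / lam 1;
         C_Nys = ((lam 1 * (1 + \<epsilon>\<^sup>2)
                   + lam (k + 1) * (1 + \<epsilon>\<^sup>2 / (1 + sqrt (1 - \<epsilon>\<^sup>2))))
                  / (\<alpha> * lam i))\<^sup>2;
         AQ = A * Q;
         QAQ = transpose_mat Q * A * Q
     in C_RR \<le> 4
        \<and> \<bar>lam i - sing_val AQ i\<bar> \<le> \<bar>lam i - sym_eig QAQ i\<bar>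
        \<and> \<bar>lam i - sym_eig QAQ i\<bar> \<le> C_RR * \<epsilon>\<^sup>2 * lam 1
        \<and> \<bar>lam i - sym_eig (AQ * pinv QAQ * transpose_mat AQ) i\<bar>
            \<le> C_Nys * (\<epsilon>\<^sup>2 * lam (k + 1) + \<epsilon> ^ 4 * (lam 1 - lam (k + 1)))"
proof -
  interpret P: perturbed_eigenbasis A U lam n k \<epsilon> M N
    using A_carrier U_carrier U_orth A_eig lam_sorted lam_nonneg k_lt eps_ge eps_lt M_carrier M_norm
      N_carrier N_norm
    by unfold_locales (auto simp: sorted_eigen_decomp_def intro: order.trans[OF lam_nonneg])
  have Q: "Q = P.basis" using Q_eq P.basis_eq by simp
  have psd: "\<And>v. v \<in> carrier_vec n \<Longrightarrow> 0 \<le> v \<bullet> (A *\<^sub>v v)" using A_psd by blast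
  have i: "1 \<le> i" "i \<le> k" "i \<le> n" using i_range k_lt by auto
  have lam: "0 \<le> lam (k + 1)" "lam (k + 1) \<le> lam 1" "0 \<le> lam i" "lam i \<le> lam 1"
    using P.lam_nonneg lam_sorted k_lt i by auto
  have rr: "lam i * (1 - \<epsilon>\<^sup>2)\<^sup>2 \<le> sym_eig (transpose_mat Q * A * Q) i"
    using P.rayleigh_ritz_eig_ge[OF i(1,2)] Q by simp
  have sv: "sym_eig (transpose_mat Q * A * Q) i \<le> sing_val (A * Q) i" "sing_val (A * Q) i \<le> lam i"
    using rayleigh_ritz_eig_le_sing_val[OF A_carrier A_sym psd Q_carrier Q_orth i(1,2)]
      sing_val_le_eig[OF P.decomp A_sym P.lam_nonneg Q_carrier Q_orth i(1,2)] k_lt by auto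
  have nys: "lam i - \<epsilon>\<^sup>2 * lam (k + 1) / (1 - \<epsilon>\<^sup>2)\<^sup>2 \<le> sym_eig (nystrom A Q) i"
    "sym_eig (nystrom A Q) i \<le> lam i"
    using P.nystrom_eig_ge[OF psd i(1,2)] nystrom_eig_le[OF P.decomp A_sym psd Q_carrier i(1,3)] Q by auto
  show ?thesis
    unfolding Let_def nystrom_def[symmetric]
    using rayleigh_ritz_error_bound[OF eps_ge eps_lt lam1_pos lam rr order_trans[OF sv]]
      nystrom_error_bound[OF eps_ge eps_lt lam(1,2) lam_i_pos lam(4) alpha_pos nys] sv
    by auto
qed

end
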